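(* Let $G,H$ be finite simple graphs and $T:G\to G$, $S:H\to H$ graph endomorphisms. Then the map $T*S:V(G)\times V(H)\to V(G)\times V(H)$, $(v,w)\mapsto(T(v),S(w))$, is a graph endomorphism of $G*H$, and the Lefschetz numbers satisfy $$L(G*H,T*S)=L(G,T)\,L(H,S).$$
   Context: A graph endomorphism of a finite simple graph $G$ is a map $T:V(G)\to V(G)$ such that for adjacent vertices $u,v$, the images $T(u),T(v)$ are equal or adjacent; it therefore maps complete subgraphs to complete subgraphs and induces a simplicial map of the clique (Whitney) complex of $G$ (the simplicial complex of vertex sets of complete subgraphs). The Lefschetz number is $L(G,T)=\sum_{p\ge0}(-1)^p\,\mathrm{tr}\big(T^*\,|\,H^p(G)\big)$, where $H^p(G)$ is the $p$-th simplicial cohomology with real coefficients of the clique complex of $G$ (equivalently the kernel of the Hodge Laplacian on $p$-forms). The strong product $G*H$ has vertex set $V(G)\times V(H)$, two distinct vertices $(a,b),(c,d)$ being adjacent iff ($a=c$ or $a\sim c$ in $G$) and ($b=d$ or $b\sim d$ in $H$). *)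

theory Defs
  imports Complex_Main
begin

definition simple_graph :: "'a set \<Rightarrow> ('a \<Rightarrow> 'a \<Rightarrow> bool) \<Rightarrow> bool" where
  "simple_graph V E \<longleftrightarrow> finite V \<and> (\<forall>x y. E x y \<longrightarrow> x \<in> V \<and> y \<in> V)
     \<and> (\<forall>x y. E x y \<longrightarrow> E y x) \<and> (\<forall>x. \<not> E x x)"

definition graph_endo :: "'a set \<Rightarrow> ('a \<Rightarrow> 'a \<Rightarrow> bool) \<Rightarrow> ('a \<Rightarrow> 'a) \<Rightarrow> bool" where
  "graph_endo V E T \<longleftrightarrow> T ` V \<subseteq> V \<and>
     (\<forall>u\<in>V. \<forall>v\<in>V. E u v \<longrightarrow> T u = T v \<or> E (T u) (T v))"

definition strong_prod :: "('a \<Rightarrow> 'a \<Rightarrow> bool) \<Rightarrow> ('b \<Rightarrow> 'b \<Rightarrow> bool) \<Rightarrow> 'a \<times> 'b \<Rightarrow> 'a \<times> 'b \<Rightarrow> bool" where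
  "strong_prod E F = (\<lambda>(a, b) (c, d). (a, b) \<noteq> (c, d) \<and> (a = c \<or> E a c) \<and> (b = d \<or> F b d))"

text \<open>Simplices of the clique (Whitney) complex: nonempty vertex sets of complete subgraphs.\<close>
definition clique :: "'a set \<Rightarrow> ('a \<Rightarrow> 'a \<Rightarrow> bool) \<Rightarrow> 'a set \<Rightarrow> bool" where
  "clique V E s \<longleftrightarrow> s \<noteq> {} \<and> s \<subseteq> V \<and> (\<forall>x\<in>s. \<forall>y\<in>s. x \<noteq> y \<longrightarrow> E x y)"

definition osimplex :: "'a set \<Rightarrow> ('a \<Rightarrow> 'a \<Rightarrow> bool) \<Rightarrow> nat \<Rightarrow> 'a list \<Rightarrow> bool" where
  "osimplex V E p xs \<longleftrightarrow> length xs = Suc p \<and> distinct xs \<and> clique V E (set xs)"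

text \<open>Real p-cochains: alternating real functions on ordered p-simplices.\<close>
definition cochains :: "'a set \<Rightarrow> ('a \<Rightarrow> 'a \<Rightarrow> bool) \<Rightarrow> nat \<Rightarrow> ('a list \<Rightarrow> real) set" where
  "cochains V E p = {f. (\<forall>xs. \<not> osimplex V E p xs \<longrightarrow> f xs = 0) \<and>
     (\<forall>xs i. Suc i < length xs \<longrightarrow> f (xs[i := xs ! Suc i, Suc i := xs ! i]) = - f xs)}"

definition del_nth :: "nat \<Rightarrow> 'a list \<Rightarrow> 'a list" where
  "del_nth i xs = take i xs @ drop (Suc i) xs"

definition coboundary :: "'a set \<Rightarrow> ('a \<Rightarrow> 'a \<Rightarrow> bool) \<Rightarrow> nat \<Rightarrow> ('a list \<Rightarrow> real) \<Rightarrow> 'a list \<Rightarrow> real" where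
  "coboundary V E p f xs = (if osimplex V E (Suc p) xs
      then (\<Sum>i<length xs. (-1) ^ i * f (del_nth i xs)) else 0)"

definition pullback :: "'a set \<Rightarrow> ('a \<Rightarrow> 'a \<Rightarrow> bool) \<Rightarrow> nat \<Rightarrow> ('a \<Rightarrow> 'a) \<Rightarrow> ('a list \<Rightarrow> real) \<Rightarrow> 'a list \<Rightarrow> real" where
  "pullback V E p T f xs = (if osimplex V E p xs then f (map T xs) else 0)"

definition cocycles :: "'a set \<Rightarrow> ('a \<Rightarrow> 'a \<Rightarrow> bool) \<Rightarrow> nat \<Rightarrow> ('a list \<Rightarrow> real) set" where
  "cocycles V E p = {f \<in> cochains V E p. coboundary V E p f = (\<lambda>_. 0)}"

definition coboundaries :: "'a set \<Rightarrow> ('a \<Rightarrow> 'a \<Rightarrow> bool) \<Rightarrow> nat \<Rightarrow> ('a list \<Rightarrow> real) set" where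
  "coboundaries V E p = (case p of 0 \<Rightarrow> {\<lambda>_. 0}
      | Suc q \<Rightarrow> coboundary V E q ` cochains V E q)"

definition lincomb :: "(('b \<Rightarrow> real) \<Rightarrow> real) \<Rightarrow> ('b \<Rightarrow> real) set \<Rightarrow> 'b \<Rightarrow> real" where
  "lincomb a B = (\<lambda>x. \<Sum>b\<in>B. a b * b x)"

text \<open>Trace of the linear map induced by g on the quotient space K / I, computed in a
  basis of K / I given by representatives B.\<close>
definition quot_trace :: "('b \<Rightarrow> real) set \<Rightarrow> ('b \<Rightarrow> real) set \<Rightarrow> (('b \<Rightarrow> real) \<Rightarrow> ('b \<Rightarrow> real)) \<Rightarrow> real" where
  "quot_trace K I g = (THE t. \<exists>B c. finite B \<and> B \<subseteq> K
      \<and> (\<forall>a. lincomb a B \<in> I \<longrightarrow> (\<forall>b\<in>B. a b = 0))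
      \<and> (\<forall>k\<in>K. \<exists>a. (\<lambda>x. k x - lincomb a B x) \<in> I)
      \<and> (\<forall>b\<in>B. (\<lambda>x. g b x - lincomb (c b) B x) \<in> I)
      \<and> t = (\<Sum>b\<in>B. c b b))"

text \<open>Trace of T^* on H^p(G) = Z^p / B^p (real simplicial cohomology of the clique complex).\<close>
definition cohom_trace :: "'a set \<Rightarrow> ('a \<Rightarrow> 'a \<Rightarrow> bool) \<Rightarrow> ('a \<Rightarrow> 'a) \<Rightarrow> nat \<Rightarrow> real" where
  "cohom_trace V E T p = quot_trace (cocycles V E p) (coboundaries V E p) (pullback V E p T)"

text \<open>Lefschetz number; H^p = 0 for p \<ge> card V, so the sum is the full alternating sum.\<close>
definition lefschetz :: "'a set \<Rightarrow> ('a \<Rightarrow> 'a \<Rightarrow> bool) \<Rightarrow> ('a \<Rightarrow> 'a) \<Rightarrow> real" where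
  "lefschetz V E T = (\<Sum>p\<le>card V. (-1) ^ p * cohom_trace V E T p)"

end

(* By the Hopf trace formula, the Lefschetz number is the alternating sum of the traces of
   the pullback on the cochain groups. In the basis of elementary cochains only the
   T-invariant cliques contribute, each by -(-1)^k with k the number of cycles of T on it.
   The cliques of the strong product are the sets whose two projections are cliques, so it
   remains to show that the invariant subsets of A x B projecting onto A and onto B contribute
   exactly minus the product of the contributions of A and B. This follows by Moebius
   inversion on the lattices of invariant subsets, since the cycle parities of all invariant
   subsets of a nonempty invariant set sum to zero: adjoining or removing one orbit flips the
   parity. *)

theory Submission
  imports Defs "HOL-Library.Function_Algebras" "HOL-Combinatorics.Cycles"
begin

section \<open>Traces on quotients of finite-dimensional spaces\<close>

instantiation "fun" :: (type, real_vector) real_vector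
begin

definition scaleR_fun :: "real \<Rightarrow> ('a \<Rightarrow> 'b) \<Rightarrow> 'a \<Rightarrow> 'b" where
  "scaleR r f = (\<lambda>x. r *\<^sub>R f x)"

instance
  by standard (simp_all add: scaleR_fun_def fun_eq_iff scaleR_add_right scaleR_add_left)

end

lemma scaleR_fun_apply [simp]: "(r *\<^sub>R f) x = r *\<^sub>R f x"
  by (simp add: scaleR_fun_def)

lemma sum_fun_apply: "(\<Sum>b\<in>B. (F b :: 'a \<Rightarrow> 'b::comm_monoid_add)) x = (\<Sum>b\<in>B. F b x)"
  by (induction B rule: infinite_finite_induct) auto

lemma lincomb_eq_sum: "lincomb a B = (\<Sum>b\<in>B. a b *\<^sub>R b)"
  by (simp add: lincomb_def fun_eq_iff sum_fun_apply)

definition cong_mod :: "'v::real_vector set \<Rightarrow> 'v \<Rightarrow> 'v \<Rightarrow> bool" where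
  "cong_mod I x y \<longleftrightarrow> x - y \<in> I"

lemma cong_mod_sym: "subspace I \<Longrightarrow> cong_mod I x y \<Longrightarrow> cong_mod I y x"
  unfolding cong_mod_def by (metis minus_diff_eq subspace_neg)

lemma cong_mod_trans: "subspace I \<Longrightarrow> cong_mod I x y \<Longrightarrow> cong_mod I y z \<Longrightarrow> cong_mod I x z"
  unfolding cong_mod_def by (metis diff_add_cancel add_diff_eq subspace_add)

lemma cong_mod_lincomb:
  assumes "subspace I" and "\<And>b. b \<in> B \<Longrightarrow> cong_mod I (h b) (h' b)"
  shows "cong_mod I (\<Sum>b\<in>B. a b *\<^sub>R h b) (\<Sum>b\<in>B. a b *\<^sub>R h' b)"
proof -
  have "(\<Sum>b\<in>B. a b *\<^sub>R h b) - (\<Sum>b\<in>B. a b *\<^sub>R h' b) = (\<Sum>b\<in>B. a b *\<^sub>R (h b - h' b))"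
    by (simp add: sum_subtractf scaleR_diff_right)
  also have "\<dots> \<in> I"
    using assms by (intro subspace_sum subspace_scale) (auto simp: cong_mod_def)
  finally show ?thesis by (simp add: cong_mod_def)
qed

lemma cong_mod_linear:
  "linear g \<Longrightarrow> (\<forall>x\<in>I. g x \<in> I) \<Longrightarrow> cong_mod I x y \<Longrightarrow> cong_mod I (g x) (g y)"
  by (simp add: cong_mod_def linear_diff[symmetric])

lemma sum_scaleR_sum:
  "(\<Sum>b\<in>B. a b *\<^sub>R (\<Sum>b'\<in>B'. m b b' *\<^sub>R (h b' :: 'v::real_vector)))
    = (\<Sum>b'\<in>B'. (\<Sum>b\<in>B. a b * m b b') *\<^sub>R h b')"
  by (simp add: scaleR_sum_right scaleR_sum_left) (rule sum.swap)

lemma sum_scaleR_delta: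
  "finite B \<Longrightarrow> b \<in> B \<Longrightarrow> (\<Sum>b'\<in>B. (if b' = b then 1 else 0) *\<^sub>R b') = (b :: 'v::real_vector)"
proof -
  assume "finite B" "b \<in> B"
  have "(\<Sum>b'\<in>B. (if b' = b then 1 else 0) *\<^sub>R b') = (\<Sum>b'\<in>B. if b' = b then b else 0)"
    by (rule sum.cong) auto
  thus ?thesis using \<open>finite B\<close> \<open>b \<in> B\<close> by simp
qed

text \<open>The data in the definition of \<open>quot_trace\<close>: \<open>B\<close> represents a basis of \<open>K / I\<close> and \<open>c\<close>
  is the matrix of the map induced by \<open>g\<close> in it.\<close>

definition quot_basis :: "'v::real_vector set \<Rightarrow> 'v set \<Rightarrow> ('v \<Rightarrow> 'v) \<Rightarrow> 'v set \<Rightarrow> ('v \<Rightarrow> 'v \<Rightarrow> real) \<Rightarrow> bool"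
  where "quot_basis K I g B c \<longleftrightarrow> finite B \<and> B \<subseteq> K
      \<and> (\<forall>a. (\<Sum>b\<in>B. a b *\<^sub>R b) \<in> I \<longrightarrow> (\<forall>b\<in>B. a b = 0))
      \<and> (\<forall>k\<in>K. \<exists>a. cong_mod I k (\<Sum>b\<in>B. a b *\<^sub>R b))
      \<and> (\<forall>b\<in>B. cong_mod I (g b) (\<Sum>b'\<in>B. c b b' *\<^sub>R b'))"

lemma quot_basisD:
  assumes "quot_basis K I g B c"
  shows "finite B" and "B \<subseteq> K" and "\<And>a. (\<Sum>b\<in>B. a b *\<^sub>R b) \<in> I \<Longrightarrow> \<forall>b\<in>B. a b = 0"
    and "\<And>k. k \<in> K \<Longrightarrow> \<exists>a. cong_mod I k (\<Sum>b\<in>B. a b *\<^sub>R b)"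
    and "\<And>b. b \<in> B \<Longrightarrow> cong_mod I (g b) (\<Sum>b'\<in>B. c b b' *\<^sub>R b')"
  using assms unfolding quot_basis_def by blast+

lemma quot_trace_altdef:
  "quot_trace K I g = (THE t. \<exists>B c. quot_basis K I g B c \<and> t = (\<Sum>b\<in>B. c b b))"
proof -
  have "(\<lambda>x. k x - lincomb a B x) = k - (\<Sum>b\<in>B. a b *\<^sub>R b)" for k a and B :: "('a \<Rightarrow> real) set"
    by (simp add: fun_eq_iff lincomb_eq_sum)
  thus ?thesis
    unfolding quot_trace_def quot_basis_def cong_mod_def lincomb_eq_sum conj_assoc by simp
qed

lemma quot_basis_coord_unique:
  assumes I: "subspace I" and Q: "quot_basis K I g B c"
    and cong: "cong_mod I (\<Sum>b\<in>B. a b *\<^sub>R b) (\<Sum>b\<in>B. a' b *\<^sub>R b)" and b: "b \<in> B"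
  shows "a b = a' b"
proof -
  have "(\<Sum>b\<in>B. (a b - a' b) *\<^sub>R b) \<in> I"
    using cong by (simp add: cong_mod_def scaleR_diff_left sum_subtractf)
  hence "\<forall>b\<in>B. a b - a' b = 0" by (rule quot_basisD(3)[OF Q])
  thus ?thesis using b by simp
qed

lemma quot_basis_transition:
  fixes B B' :: "'v::real_vector set"
  assumes I: "subspace I" and Q: "quot_basis K I g B c" and Q': "quot_basis K I g' B' c'"
  obtains M N where
    "\<And>b'. b' \<in> B' \<Longrightarrow> cong_mod I b' (\<Sum>b\<in>B. M b' b *\<^sub>R b)"
    "\<And>b. b \<in> B \<Longrightarrow> cong_mod I b (\<Sum>b'\<in>B'. N b b' *\<^sub>R b')"
    "\<And>b b2. b \<in> B \<Longrightarrow> b2 \<in> B \<Longrightarrow> (\<Sum>b'\<in>B'. N b b' * M b' b2) = (if b2 = b then 1 else 0)"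
proof -
  note cong_mod_trans[OF I, trans]
  have "\<forall>b'\<in>B'. \<exists>a. cong_mod I b' (\<Sum>b\<in>B. a b *\<^sub>R b)"
    using quot_basisD(4)[OF Q] quot_basisD(2)[OF Q'] by blast
  then obtain M where M: "\<And>b'. b' \<in> B' \<Longrightarrow> cong_mod I b' (\<Sum>b\<in>B. M b' b *\<^sub>R b)" by metis
  have "\<forall>b\<in>B. \<exists>a. cong_mod I b (\<Sum>b'\<in>B'. a b' *\<^sub>R b')"
    using quot_basisD(4)[OF Q'] quot_basisD(2)[OF Q] by blast
  then obtain N where N: "\<And>b. b \<in> B \<Longrightarrow> cong_mod I b (\<Sum>b'\<in>B'. N b b' *\<^sub>R b')" by metis
  have NM: "(\<Sum>b'\<in>B'. N b b' * M b' b2) = (if b2 = b then 1 else 0)"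
    if b: "b \<in> B" and b2: "b2 \<in> B" for b b2
  proof -
    have "cong_mod I (\<Sum>b2\<in>B. (if b2 = b then 1 else 0) *\<^sub>R b2) (\<Sum>b'\<in>B'. N b b' *\<^sub>R b')"
      using N[OF b] sum_scaleR_delta[OF quot_basisD(1)[OF Q] b] by simp
    also have "cong_mod I \<dots> (\<Sum>b'\<in>B'. N b b' *\<^sub>R (\<Sum>b\<in>B. M b' b *\<^sub>R b))"
      using M by (intro cong_mod_lincomb I) auto
    also have "(\<Sum>b'\<in>B'. N b b' *\<^sub>R (\<Sum>b\<in>B. M b' b *\<^sub>R b)) = (\<Sum>b2\<in>B. (\<Sum>b'\<in>B'. N b b' * M b' b2) *\<^sub>R b2)"
      by (rule sum_scaleR_sum)
    finally show ?thesis
      by (rule quot_basis_coord_unique[OF I Q _ b2, symmetric])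
  qed
  show ?thesis by (rule that[OF M N NM])
qed

lemma trace_conjugate:
  assumes fin: "finite B"
    and inv: "\<And>b b2. b \<in> B \<Longrightarrow> b2 \<in> B \<Longrightarrow> (\<Sum>b'\<in>B'. N b b' * M b' b2) = (if b2 = b then 1 else 0)"
  shows "(\<Sum>b'\<in>B'. \<Sum>b2\<in>B. (\<Sum>b\<in>B. M b' b * c b b2) * N b2 b') = (\<Sum>b\<in>B. c b (b :: 'b) :: real)"
proof -
  have "(\<Sum>b'\<in>B'. \<Sum>b2\<in>B. (\<Sum>b\<in>B. M b' b * c b b2) * N b2 b')
      = (\<Sum>b'\<in>B'. \<Sum>b2\<in>B. \<Sum>b\<in>B. c b b2 * (N b2 b' * M b' b))"
    by (simp add: sum_distrib_left sum_distrib_right mult_ac)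
  also have "\<dots> = (\<Sum>b2\<in>B. \<Sum>b'\<in>B'. \<Sum>b\<in>B. c b b2 * (N b2 b' * M b' b))"
    by (rule sum.swap)
  also have "\<dots> = (\<Sum>b2\<in>B. \<Sum>b\<in>B. \<Sum>b'\<in>B'. c b b2 * (N b2 b' * M b' b))"
    by (rule sum.cong[OF refl], rule sum.swap)
  also have "\<dots> = (\<Sum>b2\<in>B. \<Sum>b\<in>B. c b b2 * (\<Sum>b'\<in>B'. N b2 b' * M b' b))"
    by (simp add: sum_distrib_left)
  also have "\<dots> = (\<Sum>b2\<in>B. \<Sum>b\<in>B. if b = b2 then c b b2 else 0)"
    by (intro sum.cong refl) (simp add: inv)
  also have "\<dots> = (\<Sum>b\<in>B. c b b)"
    using fin by simp
  finally show ?thesis .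
qed

lemma quot_basis_trace_unique:
  assumes I: "subspace I" and g: "linear g" and gI: "\<forall>x\<in>I. g x \<in> I"
    and Q: "quot_basis K I g B c" and Q': "quot_basis K I g B' c'"
  shows "(\<Sum>b\<in>B'. c' b b) = (\<Sum>b\<in>B. c b b)"
proof -
  obtain M N where M: "\<And>b'. b' \<in> B' \<Longrightarrow> cong_mod I b' (\<Sum>b\<in>B. M b' b *\<^sub>R b)"
    and N: "\<And>b. b \<in> B \<Longrightarrow> cong_mod I b (\<Sum>b'\<in>B'. N b b' *\<^sub>R b')"
    and NM: "\<And>b b2. b \<in> B \<Longrightarrow> b2 \<in> B \<Longrightarrow> (\<Sum>b'\<in>B'. N b b' * M b' b2) = (if b2 = b then 1 else 0)"
    using quot_basis_transition[OF I Q Q'] by blast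
  note gc = quot_basisD(5)[OF Q] and gc' = quot_basisD(5)[OF Q']
  note cong_mod_trans[OF I, trans]
  have "c' b' b'' = (\<Sum>b2\<in>B. (\<Sum>b\<in>B. M b' b * c b b2) * N b2 b'')"
    if b': "b' \<in> B'" and b'': "b'' \<in> B'" for b' b''
  proof -
    have "cong_mod I (\<Sum>b2\<in>B'. c' b' b2 *\<^sub>R b2) (g b')"
      using gc'[OF b'] by (rule cong_mod_sym[OF I])
    also have "cong_mod I (g b') (g (\<Sum>b\<in>B. M b' b *\<^sub>R b))"
      using cong_mod_linear[OF g gI M[OF b']] .
    also have "g (\<Sum>b\<in>B. M b' b *\<^sub>R b) = (\<Sum>b\<in>B. M b' b *\<^sub>R g b)"
      by (simp add: linear_sum[OF g] linear_scale[OF g])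
    also have "cong_mod I \<dots> (\<Sum>b\<in>B. M b' b *\<^sub>R (\<Sum>b2\<in>B. c b b2 *\<^sub>R b2))"
      using gc by (intro cong_mod_lincomb I)
    also have "\<dots> = (\<Sum>b2\<in>B. (\<Sum>b\<in>B. M b' b * c b b2) *\<^sub>R b2)"
      by (rule sum_scaleR_sum)
    also have "cong_mod I \<dots> (\<Sum>b2\<in>B. (\<Sum>b\<in>B. M b' b * c b b2) *\<^sub>R (\<Sum>b''\<in>B'. N b2 b'' *\<^sub>R b''))"
      using N by (intro cong_mod_lincomb I)
    also have "\<dots> = (\<Sum>b''\<in>B'. (\<Sum>b2\<in>B. (\<Sum>b\<in>B. M b' b * c b b2) * N b2 b'') *\<^sub>R b'')"
      by (rule sum_scaleR_sum)
    finally show ?thesis by (rule quot_basis_coord_unique[OF I Q' _ b''])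
  qed
  hence "(\<Sum>b\<in>B'. c' b b) = (\<Sum>b'\<in>B'. \<Sum>b2\<in>B. (\<Sum>b\<in>B. M b' b * c b b2) * N b2 b')"
    by (intro sum.cong) auto
  also have "\<dots> = (\<Sum>b\<in>B. c b b)"
    by (rule trace_conjugate[OF quot_basisD(1)[OF Q] NM])
  finally show ?thesis .
qed

lemma quot_trace_eq:
  assumes I: "subspace I" and g: "linear g" and gI: "\<forall>x\<in>I. g x \<in> I"
    and Q: "quot_basis K I g B c"
  shows "quot_trace K I g = (\<Sum>b\<in>B. c b b)"
  unfolding quot_trace_altdef
proof (rule the_equality)
  show "\<exists>B' c'. quot_basis K I g B' c' \<and> (\<Sum>b\<in>B. c b b) = (\<Sum>b\<in>B'. c' b b)"
    using Q by blast
next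
  fix t assume "\<exists>B' c'. quot_basis K I g B' c' \<and> t = (\<Sum>b\<in>B'. c' b b)"
  thus "t = (\<Sum>b\<in>B. c b b)" using quot_basis_trace_unique[OF I g gI Q] by blast
qed

lemma independent_mod_span:
  fixes BK BI :: "'v::real_vector set"
  assumes fin: "finite BK" and indep: "independent BK" and BI: "BI \<subseteq> BK"
    and a: "(\<Sum>b\<in>BK - BI. a b *\<^sub>R b) \<in> span BI"
  shows "\<forall>b\<in>BK - BI. a b = 0"
proof -
  have fBI: "finite BI" using fin BI by (rule finite_subset[rotated])
  have "(\<Sum>b\<in>BK - BI. a b *\<^sub>R b) \<in> range (\<lambda>u. \<Sum>v\<in>BI. u v *\<^sub>R v)"
    using a span_finite[OF fBI] by auto
  then obtain w where w: "(\<Sum>b\<in>BK - BI. a b *\<^sub>R b) = (\<Sum>v\<in>BI. w v *\<^sub>R v)" by blast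
  define u where "u = (\<lambda>v. if v \<in> BI then - w v else a v)"
  have "(\<Sum>v\<in>BK. u v *\<^sub>R v) = (\<Sum>v\<in>BK - BI. a v *\<^sub>R v) + (\<Sum>v\<in>BI. - w v *\<^sub>R v)"
    using sum.subset_diff[OF BI fin, of "\<lambda>v. u v *\<^sub>R v"] by (simp add: u_def)
  also have "\<dots> = 0" by (simp add: w sum_negf)
  finally have "\<forall>v\<in>BK. u v = 0" using indep dependent_finite[OF fin] by blast
  thus ?thesis by (auto simp: u_def)
qed

lemma quot_basis_exists:
  fixes K I :: "'v::real_vector set"
  assumes I: "subspace I" and IK: "I \<subseteq> K" and fin: "finite F" and KF: "K \<subseteq> span F"
    and gK: "\<forall>x\<in>K. g x \<in> K"
  obtains B c where "quot_basis K I g B c"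
proof -
  obtain BI where BI: "BI \<subseteq> I" "independent BI" "I \<subseteq> span BI"
    by (rule basis_exists)
  obtain BK where BK: "BI \<subseteq> BK" "BK \<subseteq> K" "independent BK" "K \<subseteq> span BK"
    using BI IK by (metis maximal_independent_subset_extend order_trans)
  have fBK: "finite BK"
    using independent_span_bound[OF fin BK(3)] BK(2) KF by blast
  define B where "B = BK - BI"
  have span: "\<exists>a. cong_mod I k (\<Sum>b\<in>B. a b *\<^sub>R b)" if "k \<in> K" for k
  proof -
    have "k \<in> range (\<lambda>u. \<Sum>v\<in>BK. u v *\<^sub>R v)"
      using that BK(4) span_finite[OF fBK] by auto
    then obtain u where u: "k = (\<Sum>v\<in>BK. u v *\<^sub>R v)" by blast
    have "k - (\<Sum>b\<in>B. u b *\<^sub>R b) = (\<Sum>v\<in>BI. u v *\<^sub>R v)"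
      using sum.subset_diff[OF BK(1) fBK, of "\<lambda>v. u v *\<^sub>R v"] by (simp add: u B_def)
    also have "\<dots> \<in> I" using I BI(1) by (intro subspace_sum subspace_scale) auto
    finally show ?thesis unfolding cong_mod_def by blast
  qed
  have "\<forall>b\<in>B. \<exists>a. cong_mod I (g b) (\<Sum>b'\<in>B. a b' *\<^sub>R b')"
    using span gK BK(2) by (auto simp: B_def)
  then obtain c where "\<forall>b\<in>B. cong_mod I (g b) (\<Sum>b'\<in>B. c b b' *\<^sub>R b')"
    by metis
  moreover have "\<forall>b\<in>B. a b = 0" if "(\<Sum>b\<in>B. a b *\<^sub>R b) \<in> I" for a
    using independent_mod_span[OF fBK BK(3,1)] that BI(3) by (auto simp: B_def)
  ultimately have "quot_basis K I g B c"
    unfolding quot_basis_def using fBK BK(2) span by (auto simp: B_def)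
  thus thesis by (rule that)
qed

lemma quot_trace_zero:
  assumes g: "linear g"
  shows "quot_trace {0} {0} g = 0"
proof -
  have "quot_basis {0} {0} g {} (\<lambda>_ _. 0)"
    by (simp add: quot_basis_def cong_mod_def)
  thus ?thesis
    using quot_trace_eq[OF _ g] by (simp add: subspace_def linear_0[OF g])
qed

lemma quot_basis_disjoint:
  assumes Q1: "quot_basis J I g B1 c1" and Q2: "quot_basis K J g B2 c2"
  shows "B1 \<inter> B2 = {}"
proof (rule ccontr)
  assume "B1 \<inter> B2 \<noteq> {}"
  then obtain b where b: "b \<in> B1" "b \<in> B2" by blast
  have "(\<Sum>b'\<in>B2. (if b' = b then 1 else 0) *\<^sub>R b') \<in> J"
    using b quot_basisD(1,2)[OF Q1] quot_basisD(1)[OF Q2] sum_scaleR_delta[of B2 b] by auto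
  hence "\<forall>b'\<in>B2. (if b' = b then 1 else 0 :: real) = 0"
    by (rule quot_basisD(3)[OF Q2])
  thus False using b by auto
qed

lemma quot_basis_union_independent:
  assumes J: "subspace J" and IJ: "I \<subseteq> J"
    and Q1: "quot_basis J I g B1 c1" and Q2: "quot_basis K J g B2 c2"
    and a: "(\<Sum>b\<in>B1 \<union> B2. a b *\<^sub>R b) \<in> I"
  shows "\<forall>b\<in>B1 \<union> B2. a b = 0"
proof -
  note P1 = quot_basisD[OF Q1] and P2 = quot_basisD[OF Q2]
  have split: "(\<Sum>b\<in>B1 \<union> B2. a b *\<^sub>R b) = (\<Sum>b\<in>B1. a b *\<^sub>R b) + (\<Sum>b\<in>B2. a b *\<^sub>R b)"
    using P1(1) P2(1) quot_basis_disjoint[OF Q1 Q2] by (rule sum.union_disjoint)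
  have s1: "(\<Sum>b\<in>B1. a b *\<^sub>R b) \<in> J"
    using J P1(2) by (intro subspace_sum subspace_scale) auto
  have "(\<Sum>b\<in>B2. a b *\<^sub>R b) \<in> J"
    using subspace_diff[OF J subsetD[OF IJ a] s1] by (simp add: split)
  hence a2: "\<forall>b\<in>B2. a b = 0" by (rule P2(3))
  hence "(\<Sum>b\<in>B1. a b *\<^sub>R b) \<in> I" using a by (simp add: split)
  with a2 show ?thesis using P1(3) by blast
qed

lemma quot_basis_union_spanning:
  assumes Q1: "quot_basis J I g B1 c1" and Q2: "quot_basis K J g B2 c2" and k: "k \<in> K"
  shows "\<exists>a. cong_mod I k (\<Sum>b\<in>B1 \<union> B2. a b *\<^sub>R b)"
proof -
  note P1 = quot_basisD[OF Q1] and P2 = quot_basisD[OF Q2]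
  have disj: "B1 \<inter> B2 = {}" by (rule quot_basis_disjoint[OF Q1 Q2])
  obtain a2 where "k - (\<Sum>b\<in>B2. a2 b *\<^sub>R b) \<in> J" using P2(4) k unfolding cong_mod_def by blast
  then obtain a1 where "(k - (\<Sum>b\<in>B2. a2 b *\<^sub>R b)) - (\<Sum>b\<in>B1. a1 b *\<^sub>R b) \<in> I"
    using P1(4) unfolding cong_mod_def by blast
  moreover have "(\<Sum>b\<in>B1. (if b \<in> B1 then a1 b else a2 b) *\<^sub>R b) = (\<Sum>b\<in>B1. a1 b *\<^sub>R b)"
    and "(\<Sum>b\<in>B2. (if b \<in> B1 then a1 b else a2 b) *\<^sub>R b) = (\<Sum>b\<in>B2. a2 b *\<^sub>R b)"
    using disj by (auto intro!: sum.cong)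
  ultimately have "cong_mod I k (\<Sum>b\<in>B1 \<union> B2. (if b \<in> B1 then a1 b else a2 b) *\<^sub>R b)"
    unfolding cong_mod_def sum.union_disjoint[OF P1(1) P2(1) disj]
    by (simp add: diff_diff_eq add.commute)
  thus ?thesis by (intro exI[where x = "\<lambda>b. if b \<in> B1 then a1 b else a2 b"])
qed

lemma quot_basis_flag:
  assumes J: "subspace J" and IJ: "I \<subseteq> J" and JK: "J \<subseteq> K"
    and Q1: "quot_basis J I g B1 c1" and Q2: "quot_basis K J g B2 c2"
  obtains c where "quot_basis K I g (B1 \<union> B2) c"
    and "(\<Sum>b\<in>B1 \<union> B2. c b b) = (\<Sum>b\<in>B1. c1 b b) + (\<Sum>b\<in>B2. c2 b b)"
proof -
  note P1 = quot_basisD[OF Q1] and P2 = quot_basisD[OF Q2]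
  have disj: "B1 \<inter> B2 = {}" by (rule quot_basis_disjoint[OF Q1 Q2])
  note split = sum.union_disjoint[OF P1(1) P2(1) disj]
  have "\<forall>b\<in>B2. \<exists>a. cong_mod I (g b - (\<Sum>b'\<in>B2. c2 b b' *\<^sub>R b')) (\<Sum>b'\<in>B1. a b' *\<^sub>R b')"
    using P1(4) P2(5) by (auto simp: cong_mod_def)
  then obtain d where d: "\<And>b. b \<in> B2 \<Longrightarrow>
      cong_mod I (g b - (\<Sum>b'\<in>B2. c2 b b' *\<^sub>R b')) (\<Sum>b'\<in>B1. d b b' *\<^sub>R b')"
    by (metis bchoice)
  \<comment> \<open>the matrix is block triangular: \<open>B1\<close> spans a \<open>g\<close>-invariant subspace modulo \<open>I\<close>\<close>
  define c where "c = (\<lambda>b b'. if b \<in> B1 then (if b' \<in> B1 then c1 b b' else 0)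
      else if b' \<in> B2 then c2 b b' else d b b')"
  have gc: "cong_mod I (g b) (\<Sum>b'\<in>B1 \<union> B2. c b b' *\<^sub>R b')" if b: "b \<in> B1 \<union> B2" for b
  proof (cases "b \<in> B1")
    case True
    have "(\<Sum>b'\<in>B1. c b b' *\<^sub>R b') = (\<Sum>b'\<in>B1. c1 b b' *\<^sub>R b')"
      using True by (intro sum.cong) (auto simp: c_def)
    moreover have "(\<Sum>b'\<in>B2. c b b' *\<^sub>R b') = 0"
      using True disj by (intro sum.neutral) (auto simp: c_def)
    ultimately show ?thesis using P1(5) True by (simp add: split)
  next
    case False
    have "(\<Sum>b'\<in>B1. c b b' *\<^sub>R b') = (\<Sum>b'\<in>B1. d b b' *\<^sub>R b')"
      using False disj by (intro sum.cong) (auto simp: c_def)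
    moreover have "(\<Sum>b'\<in>B2. c b b' *\<^sub>R b') = (\<Sum>b'\<in>B2. c2 b b' *\<^sub>R b')"
      using False by (intro sum.cong) (auto simp: c_def)
    ultimately show ?thesis
      using d b False by (simp add: split cong_mod_def diff_diff_eq add.commute)
  qed
  have "(\<Sum>b\<in>B1. c b b) = (\<Sum>b\<in>B1. c1 b b)" and "(\<Sum>b\<in>B2. c b b) = (\<Sum>b\<in>B2. c2 b b)"
    using disj by (auto intro!: sum.cong simp: c_def)
  moreover have "quot_basis K I g (B1 \<union> B2) c"
    unfolding quot_basis_def
    using P1(1,2) P2(1,2) JK gc quot_basis_union_independent[OF J IJ Q1 Q2]
      quot_basis_union_spanning[OF Q1 Q2] by blast
  ultimately show thesis using that by (simp add: split)
qed

lemma linear_eq_if_cong_mod: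
  assumes phi: "linear \<phi>" and IK: "I \<subseteq> K" and ker: "\<forall>k\<in>K. \<phi> k = 0 \<longleftrightarrow> k \<in> I"
    and "cong_mod I x y"
  shows "\<phi> x = \<phi> y"
proof -
  have "x - y \<in> K" "x - y \<in> I" using assms by (auto simp: cong_mod_def)
  hence "\<phi> (x - y) = 0" using ker by blast
  thus ?thesis by (simp add: linear_diff[OF phi])
qed

lemma quot_basis_inj_on:
  assumes K: "subspace K" and phi: "linear \<phi>" and ker: "\<forall>k\<in>K. \<phi> k = 0 \<longleftrightarrow> k \<in> I"
    and Q: "quot_basis K I g B c"
  shows "inj_on \<phi> B"
proof (rule inj_onI)
  fix b1 b2 assume b: "b1 \<in> B" "b2 \<in> B" "\<phi> b1 = \<phi> b2"
  note P = quot_basisD[OF Q]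
  define a where "a = (\<lambda>b. (if b = b1 then 1 else 0) - (if b = b2 then 1 else 0 :: real))"
  have "b1 - b2 \<in> K" using b P(2) by (intro subspace_diff[OF K]) auto
  moreover have "\<phi> (b1 - b2) = 0" using b(3) by (simp add: linear_diff[OF phi])
  moreover have "(\<Sum>b\<in>B. a b *\<^sub>R b) = b1 - b2"
    using sum_scaleR_delta[OF P(1) b(1)] sum_scaleR_delta[OF P(1) b(2)]
    by (simp add: a_def scaleR_diff_left sum_subtractf)
  ultimately have "\<forall>b\<in>B. a b = 0" using ker P(3) by simp
  thus "b1 = b2" using b(1) by (auto simp: a_def split: if_splits)
qed

lemma quot_basis_iso:
  fixes \<phi> :: "'v::real_vector \<Rightarrow> 'w::real_vector"
  assumes K: "subspace K" and IK: "I \<subseteq> K" and phi: "linear \<phi>" and Q: "quot_basis K I g B c"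
    and ker: "\<forall>k\<in>K. \<phi> k = 0 \<longleftrightarrow> k \<in> I" and comm: "\<forall>k\<in>K. \<phi> (g k) = g' (\<phi> k)"
  obtains c' where "quot_basis (\<phi> ` K) {0} g' (\<phi> ` B) c'"
    and "(\<Sum>x\<in>\<phi> ` B. c' x x) = (\<Sum>b\<in>B. c b b)"
proof -
  note P = quot_basisD[OF Q] and phi_cong = linear_eq_if_cong_mod[OF phi IK ker]
  have inj: "inj_on \<phi> B" by (rule quot_basis_inj_on[OF K phi ker Q])
  define \<psi> where "\<psi> = inv_into B \<phi>"
  have psi: "\<psi> (\<phi> b) = b" if "b \<in> B" for b using inj that by (simp add: \<psi>_def)
  have reindex: "(\<Sum>x\<in>\<phi> ` B. a x *\<^sub>R x) = \<phi> (\<Sum>b\<in>B. a (\<phi> b) *\<^sub>R b)" for a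
    by (simp add: sum.reindex[OF inj] linear_sum[OF phi] linear_scale[OF phi])
  define c' where "c' = (\<lambda>x y. c (\<psi> x) (\<psi> y))"
  have "quot_basis (\<phi> ` K) {0} g' (\<phi> ` B) c'"
    unfolding quot_basis_def cong_mod_def
  proof (intro conjI allI ballI impI)
    show "finite (\<phi> ` B)" "\<phi> ` B \<subseteq> \<phi> ` K" using P(1,2) by auto
  next
    fix a x assume "(\<Sum>x\<in>\<phi> ` B. a x *\<^sub>R x) \<in> {0}" and x: "x \<in> \<phi> ` B"
    moreover have "(\<Sum>b\<in>B. a (\<phi> b) *\<^sub>R b) \<in> K" using K P(2) by (intro subspace_sum subspace_scale) auto
    ultimately have "(\<Sum>b\<in>B. a (\<phi> b) *\<^sub>R b) \<in> I" using ker by (simp add: reindex)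
    thus "a x = 0" using P(3)[of "\<lambda>b. a (\<phi> b)"] x by auto
  next
    fix k' assume "k' \<in> \<phi> ` K"
    then obtain k a where "k' = \<phi> k" "cong_mod I k (\<Sum>b\<in>B. a b *\<^sub>R b)" using P(4) by blast
    hence "k' = (\<Sum>x\<in>\<phi> ` B. a (\<psi> x) *\<^sub>R x)"
      using phi_cong by (simp add: reindex psi cong: sum.cong)
    thus "\<exists>a. k' - (\<Sum>x\<in>\<phi> ` B. a x *\<^sub>R x) \<in> {0}" by auto
  next
    fix x assume "x \<in> \<phi> ` B"
    then obtain b where b: "b \<in> B" "x = \<phi> b" by blast
    have "g' x = \<phi> (g b)" using comm b P(2) by auto
    also have "\<dots> = \<phi> (\<Sum>b'\<in>B. c b b' *\<^sub>R b')" by (rule phi_cong[OF P(5)[OF b(1)]])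
    finally have "g' x = \<phi> (\<Sum>b'\<in>B. c b b' *\<^sub>R b')" .
    thus "g' x - (\<Sum>y\<in>\<phi> ` B. c' x y *\<^sub>R y) \<in> {0}" by (simp add: reindex c'_def psi b cong: sum.cong)
  qed
  moreover have "(\<Sum>x\<in>\<phi> ` B. c' x x) = (\<Sum>b\<in>B. c b b)"
    by (simp add: sum.reindex[OF inj] c'_def psi)
  ultimately show thesis by (rule that)
qed

lemma quot_trace_flag:
  fixes K J I :: "('a \<Rightarrow> real) set"
  assumes I: "subspace I" and J: "subspace J" and IJ: "I \<subseteq> J" and JK: "J \<subseteq> K"
    and fin: "finite F" and KF: "K \<subseteq> span F" and g: "linear g"
    and gK: "\<forall>x\<in>K. g x \<in> K" and gJ: "\<forall>x\<in>J. g x \<in> J" and gI: "\<forall>x\<in>I. g x \<in> I"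
  shows "quot_trace K I g = quot_trace K J g + quot_trace J I g"
proof -
  obtain B1 c1 where Q1: "quot_basis J I g B1 c1"
    using quot_basis_exists[OF I IJ fin _ gJ] JK KF by blast
  obtain B2 c2 where Q2: "quot_basis K J g B2 c2"
    using quot_basis_exists[OF J JK fin KF gK] by blast
  obtain c where Q: "quot_basis K I g (B1 \<union> B2) c"
    and tr: "(\<Sum>b\<in>B1 \<union> B2. c b b) = (\<Sum>b\<in>B1. c1 b b) + (\<Sum>b\<in>B2. c2 b b)"
    by (rule quot_basis_flag[OF J IJ JK Q1 Q2])
  show ?thesis
    using quot_trace_eq[OF I g gI Q] quot_trace_eq[OF J g gJ Q2] quot_trace_eq[OF I g gI Q1] tr
    by simp
qed

lemma quot_trace_iso:
  fixes K I :: "('a \<Rightarrow> real) set" and \<phi> :: "('a \<Rightarrow> real) \<Rightarrow> 'b \<Rightarrow> real"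
  assumes I: "subspace I" and K: "subspace K" and IK: "I \<subseteq> K"
    and fin: "finite F" and KF: "K \<subseteq> span F" and g: "linear g" and g': "linear g'"
    and gK: "\<forall>x\<in>K. g x \<in> K" and gI: "\<forall>x\<in>I. g x \<in> I" and phi: "linear \<phi>"
    and ker: "\<forall>k\<in>K. \<phi> k = 0 \<longleftrightarrow> k \<in> I" and comm: "\<forall>k\<in>K. \<phi> (g k) = g' (\<phi> k)"
  shows "quot_trace K I g = quot_trace (\<phi> ` K) {0} g'"
proof -
  obtain B c where Q: "quot_basis K I g B c"
    by (rule quot_basis_exists[OF I IK fin KF gK])
  obtain c' where Q': "quot_basis (\<phi> ` K) {0} g' (\<phi> ` B) c'"
    and tr: "(\<Sum>x\<in>\<phi> ` B. c' x x) = (\<Sum>b\<in>B. c b b)"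
    by (rule quot_basis_iso[OF K IK phi Q ker comm])
  have "subspace {0 :: 'b \<Rightarrow> real}" by (simp add: subspace_def)
  thus ?thesis
    using quot_trace_eq[OF I g gI Q] quot_trace_eq[OF _ g' _ Q'] tr by (simp add: linear_0[OF g'])
qed

lemma quot_trace_point_basis:
  fixes K :: "('a \<Rightarrow> real) set" and e :: "'i \<Rightarrow> 'a \<Rightarrow> real"
  assumes fin: "finite S" and eK: "e ` S \<subseteq> K" and g: "linear g" and gK: "\<forall>k\<in>K. g k \<in> K"
    and expand: "\<And>k. k \<in> K \<Longrightarrow> k = (\<Sum>i\<in>S. k (x i) *\<^sub>R e i)"
    and delta: "\<And>i j. i \<in> S \<Longrightarrow> j \<in> S \<Longrightarrow> e i (x j) = (if i = j then 1 else 0)"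
  shows "quot_trace K {0} g = (\<Sum>i\<in>S. g (e i) (x i))"
proof -
  have inj: "inj_on e S"
    by (rule inj_onI) (metis delta zero_neq_one)
  define \<psi> where "\<psi> = inv_into S e"
  have psi: "\<psi> (e i) = i" if "i \<in> S" for i using inj that by (simp add: \<psi>_def)
  have reindex: "(\<Sum>b\<in>e ` S. a b *\<^sub>R b) = (\<Sum>i\<in>S. a (e i) *\<^sub>R e i)" for a
    by (simp add: sum.reindex[OF inj])
  have eval: "(\<Sum>i\<in>S. a i *\<^sub>R e i) (x j) = a j" if "j \<in> S" for a j
  proof -
    have "(\<Sum>i\<in>S. a i *\<^sub>R e i) (x j) = (\<Sum>i\<in>S. if i = j then a i else 0)"
      using that by (auto simp: sum_fun_apply delta intro: sum.cong)
    thus ?thesis using fin that by simp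
  qed
  have expand': "cong_mod {0} k (\<Sum>b\<in>e ` S. k (x (\<psi> b)) *\<^sub>R b)" if "k \<in> K" for k
    using expand[OF that] by (simp add: reindex psi cong_mod_def cong: sum.cong)
  have "quot_basis K {0} g (e ` S) (\<lambda>b b'. g b (x (\<psi> b')))"
    unfolding quot_basis_def
  proof (intro conjI allI impI ballI)
    fix a b assume "(\<Sum>b\<in>e ` S. a b *\<^sub>R b) \<in> {0}" and "b \<in> e ` S"
    then obtain j where "j \<in> S" "b = e j" "(\<Sum>i\<in>S. a (e i) *\<^sub>R e i) = 0" by (auto simp: reindex)
    thus "a b = 0" using eval[of j "\<lambda>i. a (e i)"] by simp
  next
    fix k assume "k \<in> K"
    thus "\<exists>a. cong_mod {0} k (\<Sum>b\<in>e ` S. a b *\<^sub>R b)"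
      using expand' by (intro exI[where x = "\<lambda>b. k (x (\<psi> b))"])
  qed (use fin eK gK expand' in auto)
  hence "quot_trace K {0} g = (\<Sum>b\<in>e ` S. g b (x (\<psi> b)))"
    by (rule quot_trace_eq[rotated 3]) (auto simp: subspace_def g linear_0)
  thus ?thesis by (simp add: sum.reindex[OF inj] psi)
qed

section \<open>Alternating functions on lists\<close>

definition swap_adj :: "nat \<Rightarrow> 'a list \<Rightarrow> 'a list" where
  "swap_adj i xs = xs[i := xs ! Suc i, Suc i := xs ! i]"

definition alternating :: "('a list \<Rightarrow> real) \<Rightarrow> bool" where
  "alternating f \<longleftrightarrow> (\<forall>xs i. Suc i < length xs \<longrightarrow> f (swap_adj i xs) = - f xs)"

definition face_sum :: "('a list \<Rightarrow> real) \<Rightarrow> 'a list \<Rightarrow> real" where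
  "face_sum f xs = (\<Sum>i<length xs. (-1) ^ i * f (del_nth i xs))"

lemma length_del_nth: "i < length xs \<Longrightarrow> length (del_nth i xs) = length xs - 1"
  by (simp add: del_nth_def)

lemma nth_del_nth: "j < length xs - 1 \<Longrightarrow> del_nth i xs ! j = (if j < i then xs ! j else xs ! Suc j)"
  by (auto simp: del_nth_def nth_append min_def)

lemma set_del_nth: "set (del_nth i xs) \<subseteq> set xs"
  unfolding del_nth_def using set_take_subset set_drop_subset by fastforce

lemma distinct_del_nth: "distinct xs \<Longrightarrow> distinct (del_nth i xs)"
  unfolding del_nth_def using set_take_disj_set_drop_if_distinct[of xs i "Suc i"] by auto

lemma map_del_nth: "map f (del_nth i xs) = del_nth i (map f xs)"
  by (simp add: del_nth_def take_map drop_map)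

lemma del_nth_del_nth:
  "i \<le> j \<Longrightarrow> Suc j < length xs \<Longrightarrow> del_nth j (del_nth i xs) = del_nth i (del_nth (Suc j) xs)"
  by (rule nth_equalityI) (auto simp: length_del_nth nth_del_nth)

lemma length_swap_adj [simp]: "length (swap_adj i xs) = length xs"
  by (simp add: swap_adj_def)

lemma nth_swap_adj: "Suc i < length xs \<Longrightarrow> j < length xs \<Longrightarrow>
   swap_adj i xs ! j = (if j = i then xs ! Suc i else if j = Suc i then xs ! i else xs ! j)"
  by (auto simp: swap_adj_def nth_list_update)

lemma set_swap_adj: "Suc i < length xs \<Longrightarrow> set (swap_adj i xs) = set xs"
  unfolding swap_adj_def by (rule set_swap) auto

lemma distinct_swap_adj: "Suc i < length xs \<Longrightarrow> distinct (swap_adj i xs) = distinct xs"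
  unfolding swap_adj_def by (rule distinct_swap) auto

lemma map_swap_adj: "Suc i < length xs \<Longrightarrow> map f (swap_adj i xs) = swap_adj i (map f xs)"
  by (auto simp: swap_adj_def map_update)

lemma del_nth_swap_adj_less:
  "i < k \<Longrightarrow> Suc k < length xs \<Longrightarrow> del_nth i (swap_adj k xs) = swap_adj (k - 1) (del_nth i xs)"
  by (rule nth_equalityI) (auto simp: length_del_nth nth_del_nth nth_swap_adj less_Suc_eq)

lemma del_nth_swap_adj_greater:
  "Suc k < i \<Longrightarrow> i < length xs \<Longrightarrow> del_nth i (swap_adj k xs) = swap_adj k (del_nth i xs)"
  by (rule nth_equalityI) (auto simp: length_del_nth nth_del_nth nth_swap_adj less_Suc_eq)

lemma del_nth_swap_adj_self:
  "Suc k < length xs \<Longrightarrow> del_nth k (swap_adj k xs) = del_nth (Suc k) xs"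
  "Suc k < length xs \<Longrightarrow> del_nth (Suc k) (swap_adj k xs) = del_nth k xs"
  by (rule nth_equalityI; auto simp: length_del_nth nth_del_nth nth_swap_adj less_Suc_eq)+

lemma alternatingD: "alternating f \<Longrightarrow> Suc i < length xs \<Longrightarrow> f (swap_adj i xs) = - f xs"
  by (simp add: alternating_def)

lemma alternating_face_sum:
  assumes f: "alternating f"
  shows "alternating (face_sum f)"
  unfolding alternating_def
proof (intro allI impI)
  fix xs :: "'a list" and k assume k: "Suc k < length xs"
  define n where "n = length xs"
  define t where "t = (\<lambda>i. (-1) ^ i * f (del_nth i xs))"
  define \<tau> where "\<tau> = Transposition.transpose k (Suc k)"
  have \<tau>: "\<tau> permutes {..<n}"
    unfolding \<tau>_def using k by (intro permutes_swap_id) (auto simp: n_def)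
  have "(-1) ^ i * f (del_nth i (swap_adj k xs)) = - t (\<tau> i)" if i: "i < n" for i
  proof -
    consider "i < k" | "i = k \<or> i = Suc k" | "Suc k < i" by linarith
    thus ?thesis
    proof cases
      case 1
      thus ?thesis using k
        by (simp add: t_def \<tau>_def del_nth_swap_adj_less alternatingD[OF f] length_del_nth)
    next
      case 2
      thus ?thesis using k by (auto simp: t_def \<tau>_def del_nth_swap_adj_self)
    next
      case 3
      thus ?thesis using k i
        by (simp add: t_def \<tau>_def n_def del_nth_swap_adj_greater alternatingD[OF f] length_del_nth)
    qed
  qed
  hence "face_sum f (swap_adj k xs) = (\<Sum>i<n. - t (\<tau> i))"
    unfolding face_sum_def n_def by (intro sum.cong) auto
  also have "\<dots> = - (\<Sum>i<n. t i)"
    using sum.permute[OF \<tau>, of t] by (simp add: sum_negf comp_def)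
  finally show "face_sum f (swap_adj k xs) = - face_sum f xs"
    by (simp add: face_sum_def t_def n_def)
qed

lemma alternating_swap:
  assumes f: "alternating f"
  shows "i < j \<Longrightarrow> j < length xs \<Longrightarrow> f (xs[i := xs ! j, j := xs ! i]) = - f xs"
proof (induction "j - i" arbitrary: i xs rule: less_induct)
  case less
  show ?case
  proof (cases "j = Suc i")
    case True
    thus ?thesis using alternatingD[OF f, of i xs] less by (simp add: swap_adj_def)
  next
    case False
    hence ij: "Suc i < j" using less by simp
    define ys where "ys = swap_adj i xs"
    define zs where "zs = ys[Suc i := ys ! j, j := ys ! Suc i]"
    have "f zs = - f ys"
      unfolding zs_def using ij less by (intro less.hyps) (auto simp: ys_def)
    moreover have "swap_adj i zs = xs[i := xs ! j, j := xs ! i]"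
      using ij less by (intro nth_equalityI) (auto simp: zs_def ys_def swap_adj_def nth_list_update)
    moreover have "f (swap_adj i zs) = - f zs" "f ys = - f xs"
      using alternatingD[OF f] ij less by (simp_all add: zs_def ys_def)
    ultimately show ?thesis by simp
  qed
qed

lemma alternating_eq_0:
  assumes f: "alternating f" and xs: "\<not> distinct xs"
  shows "f xs = 0"
proof -
  obtain i j where ij: "i < j" "j < length xs" "xs ! i = xs ! j"
    using xs by (metis distinct_conv_nth linorder_neqE_nat)
  hence "xs[i := xs ! j, j := xs ! i] = xs" by (metis list_update_id)
  thus ?thesis using alternating_swap[OF f ij(1,2)] by simp
qed

lemma face_sum_face_sum: "face_sum (face_sum f) xs = 0"
proof -
  define n where "n = length xs"
  define G where "G = (\<lambda>(i, j). (-1) ^ i * ((-1) ^ j * f (del_nth j (del_nth i xs))))"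
  define A where "A = {(i, j). i < n \<and> j < n - 1 \<and> j < i}"
  define B where "B = {(i, j). i < n \<and> j < n - 1 \<and> i \<le> j}"
  have finB: "finite B" by (rule finite_subset[of _ "{..<n} \<times> {..<n}"]) (auto simp: B_def)
  \<comment> \<open>the simplicial identity for \<open>del_nth\<close> pairs the terms of \<open>A\<close> and \<open>B\<close> with opposite signs\<close>
  have bij: "bij_betw (\<lambda>(i, j). (Suc j, i)) B A"
    by (rule bij_betw_byWitness[where f' = "\<lambda>(i, j). (j, i - 1)"]) (auto simp: A_def B_def)
  have swap: "G (Suc j, i) = - G (i, j)" if "(i, j) \<in> B" for i j
  proof -
    have "del_nth j (del_nth i xs) = del_nth i (del_nth (Suc j) xs)"
      using that by (intro del_nth_del_nth) (auto simp: B_def n_def)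
    thus ?thesis by (simp add: G_def)
  qed
  have "face_sum (face_sum f) xs = (\<Sum>i<n. \<Sum>j<n - 1. G (i, j))"
    unfolding face_sum_def n_def G_def
    by (intro sum.cong refl) (simp add: length_del_nth sum_distrib_left)
  also have "\<dots> = (\<Sum>p\<in>A \<union> B. G p)"
    by (simp add: sum.cartesian_product) (rule sum.cong, auto simp: A_def B_def)
  also have "\<dots> = (\<Sum>p\<in>A. G p) + (\<Sum>p\<in>B. G p)"
    using finB
    by (intro sum.union_disjoint) (auto simp: A_def B_def intro: finite_subset[of _ "{..<n} \<times> {..<n}"])
  also have "(\<Sum>p\<in>A. G p) = (\<Sum>p\<in>B. G ((\<lambda>(i, j). (Suc j, i)) p))"
    by (rule sum.reindex_bij_betw[OF bij, symmetric])
  also have "\<dots> = - (\<Sum>p\<in>B. G p)"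
    unfolding sum_negf[symmetric] by (intro sum.cong refl) (clarsimp simp: swap)
  finally show ?thesis by simp
qed

lemma map_transpose_nth:
  assumes d: "distinct ys" and i: "i < length ys" and j: "j < length ys"
  shows "map (Transposition.transpose (ys ! i) (ys ! j)) ys = ys[i := ys ! j, j := ys ! i]"
proof (rule nth_equalityI)
  fix k assume "k < length (map (Transposition.transpose (ys ! i) (ys ! j)) ys)"
  moreover have "ys ! k = ys ! i \<longleftrightarrow> k = i" "ys ! k = ys ! j \<longleftrightarrow> k = j" if "k < length ys" for k
    using d that i j by (auto simp: nth_eq_iff_index_eq)
  ultimately show
    "map (Transposition.transpose (ys ! i) (ys ! j)) ys ! k = ys[i := ys ! j, j := ys ! i] ! k"
    using i j by (auto simp: nth_list_update transpose_def)
qed simp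

lemma alternating_permute:
  assumes f: "alternating f" and d: "distinct xs" and \<pi>: "\<pi> permutes set xs"
  shows "f (map \<pi> xs) = of_int (sign \<pi>) * f xs"
  using \<pi> finite_set[of xs]
proof (induction rule: permutes_induct)
  case id
  thus ?case by simp
next
  case (swap a b p)
  define ys where "ys = map p xs"
  have dys: "distinct ys" using d swap.hyps(4) by (simp add: ys_def distinct_map permutes_inj_on)
  have sys: "set ys = set xs" using permutes_image[OF swap.hyps(4)] by (simp add: ys_def)
  obtain i j where ij: "i < length ys" "j < length ys" "ys ! i = a" "ys ! j = b"
    using swap.hyps(1,2) sys by (metis in_set_conv_nth)
  have "i \<noteq> j" using ij swap.hyps(3) by auto
  hence "f (ys[i := ys ! j, j := ys ! i]) = - f ys"
    using alternating_swap[OF f, of i j ys] alternating_swap[OF f, of j i ys] ij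
    by (cases "i < j") (auto simp: list_update_swap)
  moreover have "map (Transposition.transpose a b \<circ> p) xs = ys[i := ys ! j, j := ys ! i]"
    using map_transpose_nth[OF dys ij(1,2)] ij by (simp add: ys_def)
  ultimately have f_eq: "f (map (Transposition.transpose a b \<circ> p) xs) = - f ys" by simp
  have sign_eq: "sign (Transposition.transpose a b \<circ> p) = - sign p"
    using swap.hyps(3)
      sign_compose[OF permutation_swap_id permutes_imp_permutation[OF finite_set swap.hyps(4)]]
    by (simp add: sign_swap_id)
  show ?case unfolding f_eq sign_eq ys_def swap.IH by simp
qed

section \<open>The cochain complex of the clique complex\<close>

lemma cochains_iff:
  "f \<in> cochains V E p \<longleftrightarrow> (\<forall>xs. \<not> osimplex V E p xs \<longrightarrow> f xs = 0) \<and> alternating f"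
  by (simp add: cochains_def alternating_def swap_adj_def)

lemma coboundary_eq: "coboundary V E p f xs = (if osimplex V E (Suc p) xs then face_sum f xs else 0)"
  by (simp add: coboundary_def face_sum_def)

lemma osimplex_swap_adj: "Suc i < length xs \<Longrightarrow> osimplex V E p (swap_adj i xs) = osimplex V E p xs"
  by (simp add: osimplex_def set_swap_adj distinct_swap_adj)

lemma osimplex_del_nth:
  assumes xs: "osimplex V E (Suc p) xs" and i: "i < length xs"
  shows "osimplex V E p (del_nth i xs)"
proof -
  have "length (del_nth i xs) = Suc p" using xs i by (simp add: length_del_nth osimplex_def)
  moreover have "clique V E (set (del_nth i xs))"
    using xs set_del_nth[of i xs] calculation unfolding osimplex_def clique_def by fastforce
  ultimately show ?thesis using xs distinct_del_nth by (auto simp: osimplex_def)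
qed

lemma finite_osimplices: "finite V \<Longrightarrow> finite {xs. osimplex V E p xs}"
  by (rule finite_subset[OF _ finite_lists_length_eq[of V "Suc p"]])
     (auto simp: osimplex_def clique_def)

lemma osimplex_length_le: "finite V \<Longrightarrow> osimplex V E p xs \<Longrightarrow> Suc p \<le> card V"
  unfolding osimplex_def clique_def by (metis card_mono distinct_card)

lemma coboundary_in_cochains:
  assumes f: "f \<in> cochains V E p"
  shows "coboundary V E p f \<in> cochains V E (Suc p)"
proof -
  have "alternating (face_sum f)" using f by (intro alternating_face_sum) (simp add: cochains_iff)
  hence "alternating (coboundary V E p f)"
    by (auto simp: alternating_def coboundary_eq osimplex_swap_adj)
  thus ?thesis unfolding cochains_iff by (simp add: coboundary_eq)
qed

lemma coboundary_coboundary: "coboundary V E (Suc p) (coboundary V E p f) = 0"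
proof
  fix xs
  show "coboundary V E (Suc p) (coboundary V E p f) xs = 0 xs"
  proof (cases "osimplex V E (Suc (Suc p)) xs")
    case True
    have "face_sum (coboundary V E p f) xs = face_sum (face_sum f) xs"
      unfolding face_sum_def[of "coboundary V E p f"] face_sum_def[of "face_sum f"]
      using osimplex_del_nth[OF True]
      by (intro sum.cong refl) (simp add: coboundary_eq)
    thus ?thesis using True by (simp add: coboundary_eq face_sum_face_sum)
  qed (simp add: coboundary_eq)
qed

lemma linear_coboundary: "linear (coboundary V E p)"
  by (rule linearI)
    (auto simp: fun_eq_iff coboundary_eq face_sum_def sum.distrib sum_distrib_left algebra_simps)

lemma linear_pullback: "linear (pullback V E p T)"
  by (rule linearI) (auto simp: fun_eq_iff pullback_def)

lemma subspace_cochains: "subspace (cochains V E p)"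
  by (auto simp: subspace_def cochains_iff alternating_def)

lemma cocycles_eq: "cocycles V E p = cochains V E p \<inter> {f. coboundary V E p f = 0}"
  by (auto simp: cocycles_def zero_fun_def)

lemma subspace_cocycles: "subspace (cocycles V E p)"
  unfolding cocycles_eq
  by (intro subspace_inter subspace_cochains real_vector.linear_subspace_kernel linear_coboundary)

lemma subspace_coboundaries: "subspace (coboundaries V E p)"
proof (cases p)
  case 0
  thus ?thesis by (simp add: coboundaries_def subspace_def zero_fun_def[symmetric])
next
  case (Suc q)
  thus ?thesis
    using real_vector.linear_subspace_image[OF linear_coboundary subspace_cochains]
    by (simp add: coboundaries_def)
qed

lemma cocycles_subset: "cocycles V E p \<subseteq> cochains V E p"
  by (auto simp: cocycles_def)

lemma coboundaries_subset: "coboundaries V E p \<subseteq> cocycles V E p"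
  using subspace_0[OF subspace_cocycles[of V E 0]]
  by (cases p)
    (auto simp: coboundaries_def cocycles_def coboundary_in_cochains coboundary_coboundary zero_fun_def)

lemma cochains_subset_span:
  assumes "finite V"
  shows "cochains V E p \<subseteq> span ((\<lambda>xs ys. if ys = xs then 1 else 0) ` {xs. osimplex V E p xs})"
proof
  fix f assume f: "f \<in> cochains V E p"
  define \<delta> where "\<delta> = (\<lambda>(xs :: 'a list) ys. if ys = xs then 1 else (0::real))"
  have "f = (\<Sum>xs\<in>{xs. osimplex V E p xs}. f xs *\<^sub>R \<delta> xs)"
  proof
    fix ys
    have "(\<Sum>xs\<in>{xs. osimplex V E p xs}. f xs *\<^sub>R \<delta> xs) ys
        = (\<Sum>xs\<in>{xs. osimplex V E p xs}. if xs = ys then f ys else 0)"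
      by (auto simp: sum_fun_apply \<delta>_def intro: sum.cong)
    also have "\<dots> = f ys" using f finite_osimplices[OF assms] by (auto simp: cochains_iff)
    finally show "f ys = (\<Sum>xs\<in>{xs. osimplex V E p xs}. f xs *\<^sub>R \<delta> xs) ys" by simp
  qed
  also have "\<dots> \<in> span (\<delta> ` {xs. osimplex V E p xs})"
    by (intro span_sum span_scale span_base) auto
  finally show "f \<in> span ((\<lambda>xs ys. if ys = xs then 1 else 0) ` {xs. osimplex V E p xs})"
    by (simp add: \<delta>_def)
qed

lemma cochains_trivial: "finite V \<Longrightarrow> card V \<le> p \<Longrightarrow> cochains V E p = {0}"
  using osimplex_length_le[of V E p] subspace_0[OF subspace_cochains]
  by (fastforce simp: cochains_iff fun_eq_iff)

lemma clique_image:
  assumes T: "graph_endo V E T" and s: "clique V E s"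
  shows "clique V E (T ` s)"
proof -
  have sV: "s \<subseteq> V" and adj: "\<And>x y. x \<in> s \<Longrightarrow> y \<in> s \<Longrightarrow> x \<noteq> y \<Longrightarrow> E x y"
    using s by (auto simp: clique_def)
  have "E (T x) (T y)" if "x \<in> s" "y \<in> s" "T x \<noteq> T y" for x y
    using that adj[of x y] sV T unfolding graph_endo_def by blast
  thus ?thesis using s sV T unfolding clique_def graph_endo_def by blast
qed

lemma pullback_in_cochains:
  assumes f: "f \<in> cochains V E p"
  shows "pullback V E p T f \<in> cochains V E p"
proof -
  have "alternating f" using f by (simp add: cochains_iff)
  hence "alternating (pullback V E p T f)"
    by (auto simp: alternating_def pullback_def osimplex_swap_adj map_swap_adj)
  thus ?thesis unfolding cochains_iff by (simp add: pullback_def)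
qed

lemma coboundary_pullback:
  assumes T: "graph_endo V E T" and f: "f \<in> cochains V E p"
  shows "coboundary V E p (pullback V E p T f) = pullback V E (Suc p) T (coboundary V E p f)"
proof
  fix xs
  show "coboundary V E p (pullback V E p T f) xs = pullback V E (Suc p) T (coboundary V E p f) xs"
  proof (cases "osimplex V E (Suc p) xs")
    case True
    have "face_sum (pullback V E p T f) xs = face_sum f (map T xs)"
      unfolding face_sum_def using osimplex_del_nth[OF True]
      by (intro sum.cong) (auto simp: pullback_def map_del_nth)
    moreover have "face_sum f (map T xs) = 0" if "\<not> osimplex V E (Suc p) (map T xs)"
    proof -
      \<comment> \<open>\<open>T\<close> maps the simplex onto a clique, so it can only fail to be one by collapsing vertices\<close>
      have "clique V E (T ` set xs)" using True clique_image[OF T] by (auto simp: osimplex_def)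
      hence "\<not> distinct (map T xs)" using that True by (auto simp: osimplex_def)
      moreover have "alternating f" using f by (simp add: cochains_iff)
      ultimately show ?thesis using alternating_eq_0[OF alternating_face_sum] by blast
    qed
    ultimately show ?thesis using True by (simp add: coboundary_eq pullback_def)
  qed (simp add: coboundary_eq pullback_def)
qed

section \<open>The Hopf trace formula\<close>

lemma pullback_in_cocycles:
  assumes T: "graph_endo V E T" and f: "f \<in> cocycles V E p"
  shows "pullback V E p T f \<in> cocycles V E p"
proof -
  have "f \<in> cochains V E p" "coboundary V E p f = 0"
    using f by (auto simp: cocycles_def zero_fun_def)
  hence "coboundary V E p (pullback V E p T f) = 0"
    by (simp add: coboundary_pullback[OF T] linear_0[OF linear_pullback])
  thus ?thesis using pullback_in_cochains \<open>f \<in> cochains V E p\<close> by (simp add: cocycles_def zero_fun_def)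
qed

lemma pullback_in_coboundaries:
  assumes T: "graph_endo V E T" and f: "f \<in> coboundaries V E p"
  shows "pullback V E p T f \<in> coboundaries V E p"
proof (cases p)
  case 0
  thus ?thesis
    using f linear_0[OF linear_pullback] by (simp add: coboundaries_def zero_fun_def[symmetric])
next
  case (Suc q)
  then obtain h where h: "h \<in> cochains V E q" and f: "f = coboundary V E q h"
    using f by (auto simp: coboundaries_def)
  have "pullback V E p T f = coboundary V E q (pullback V E q T h)"
    using Suc coboundary_pullback[OF T h] by (simp add: f)
  thus ?thesis
    using Suc pullback_in_cochains[OF h] by (simp add: coboundaries_def)
qed

lemma cochain_trace_split:
  assumes V: "finite V" and T: "graph_endo V E T"
  shows "quot_trace (cochains V E p) {0} (pullback V E p T) =
    quot_trace (coboundaries V E (Suc p)) {0} (pullback V E (Suc p) T)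
    + cohom_trace V E T p + quot_trace (coboundaries V E p) {0} (pullback V E p T)"
proof -
  let ?C = "cochains V E p" and ?Z = "cocycles V E p" and ?B = "coboundaries V E p"
    and ?g = "pullback V E p T"
  define F where "F = (\<lambda>xs ys. if ys = xs then 1 else 0 :: real) ` {xs. osimplex V E p xs}"
  have F: "finite F" "?C \<subseteq> span F"
    using finite_osimplices[OF V] cochains_subset_span[OF V] by (auto simp: F_def)
  have zero: "subspace {0 :: 'a list \<Rightarrow> real}" by (simp add: subspace_def)
  have BZ: "?B \<subseteq> ?Z" and ZC: "?Z \<subseteq> ?C" by (rule coboundaries_subset, rule cocycles_subset)
  have zB: "{0} \<subseteq> ?B" and zZ: "{0} \<subseteq> ?Z"
    using subspace_0[OF subspace_coboundaries] BZ by auto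
  have inv: "\<forall>x\<in>?C. ?g x \<in> ?C" "\<forall>x\<in>?Z. ?g x \<in> ?Z" "\<forall>x\<in>?B. ?g x \<in> ?B" "\<forall>x\<in>{0}. ?g x \<in> {0}"
    using pullback_in_cochains pullback_in_cocycles[OF T] pullback_in_coboundaries[OF T]
      linear_0[OF linear_pullback] by auto
  have "quot_trace ?C {0} ?g = quot_trace ?C ?Z ?g + quot_trace ?Z {0} ?g"
    by (rule quot_trace_flag[OF zero subspace_cocycles zZ ZC F linear_pullback inv(1,2,4)])
  moreover have "quot_trace ?Z {0} ?g = quot_trace ?Z ?B ?g + quot_trace ?B {0} ?g"
    by (rule quot_trace_flag[OF zero subspace_coboundaries zB BZ F(1) order_trans[OF ZC F(2)]
          linear_pullback inv(2,3,4)])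
  \<comment> \<open>the coboundary map identifies \<open>C\<^sup>p / Z\<^sup>p\<close> with \<open>B\<^sup>p\<^sup>+\<^sup>1\<close>, compatibly with the pullbacks\<close>
  moreover have
    "quot_trace ?C ?Z ?g = quot_trace (coboundaries V E (Suc p)) {0} (pullback V E (Suc p) T)"
    using quot_trace_iso[OF subspace_cocycles subspace_cochains cocycles_subset F linear_pullback
        linear_pullback _ _ linear_coboundary] inv coboundary_pullback[OF T]
    by (simp add: coboundaries_def cocycles_def zero_fun_def[symmetric])
  ultimately show ?thesis by (simp add: cohom_trace_def)
qed

theorem hopf_trace_formula:
  assumes V: "finite V" and T: "graph_endo V E T"
  shows "lefschetz V E T = (\<Sum>p\<le>card V. (-1) ^ p * quot_trace (cochains V E p) {0} (pullback V E p T))"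
proof -
  define b where "b = (\<lambda>p. quot_trace (coboundaries V E p) {0} (pullback V E p T))"
  define h where "h = (\<lambda>p. cohom_trace V E T p)"
  have b0: "b 0 = 0"
    by (simp add: b_def coboundaries_def quot_trace_zero linear_pullback zero_fun_def[symmetric])
  have "(\<Sum>p\<le>N. (-1) ^ p * quot_trace (cochains V E p) {0} (pullback V E p T))
      = (\<Sum>p\<le>N. (-1) ^ p * h p) + (-1) ^ N * b (Suc N)" for N
    using b0 cochain_trace_split[OF V T]
    by (induction N) (simp_all add: b_def h_def algebra_simps)
  moreover have "b (Suc (card V)) = 0"
  proof -
    have "coboundaries V E (Suc (card V)) = {coboundary V E (card V) 0}"
      using cochains_trivial[OF V, of "card V" E] by (simp add: coboundaries_def)
    also have "coboundary V E (card V) 0 = 0" by (rule linear_0[OF linear_coboundary])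
    finally show ?thesis by (simp add: b_def quot_trace_zero linear_pullback zero_fun_def[symmetric])
  qed
  ultimately show ?thesis by (simp add: lefschetz_def h_def)
qed

section \<open>Traces on cochains and fixed simplices\<close>

definition list_of :: "'a set \<Rightarrow> 'a list" where
  "list_of \<sigma> = (SOME l. distinct l \<and> set l = \<sigma>)"

lemma list_of: "finite \<sigma> \<Longrightarrow> distinct (list_of \<sigma>) \<and> set (list_of \<sigma>) = \<sigma>"
  unfolding list_of_def by (rule someI_ex) (use finite_distinct_list in blast)

definition list_perm :: "'a list \<Rightarrow> 'a list \<Rightarrow> 'a \<Rightarrow> 'a" where
  "list_perm l xs = restrict_id (\<lambda>y. the (map_of (zip l xs) y)) (set l)"

lemma list_perm_nth:
  "distinct l \<Longrightarrow> length xs = length l \<Longrightarrow> j < length l \<Longrightarrow> list_perm l xs (l ! j) = xs ! j"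
  by (simp add: list_perm_def map_of_zip_nth)

lemma map_list_perm: "distinct l \<Longrightarrow> length xs = length l \<Longrightarrow> map (list_perm l xs) l = xs"
  by (rule nth_equalityI) (auto simp: list_perm_nth)

lemma list_perm_outside: "y \<notin> set l \<Longrightarrow> list_perm l xs y = y"
  by (simp add: list_perm_def)

lemma list_perm_eqI:
  assumes "distinct l" "length xs = length l" "map f l = xs" "\<And>y. y \<notin> set l \<Longrightarrow> f y = y"
  shows "list_perm l xs = f"
proof
  fix y show "list_perm l xs y = f y"
    using assms list_perm_nth[of l xs] list_perm_outside[of y l xs]
    by (cases "y \<in> set l") (auto simp: in_set_conv_nth)
qed

lemma list_perm_permutes:
  assumes l: "distinct l" and xs: "distinct xs" "set xs = set l"
  shows "list_perm l xs permutes set l"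
proof (rule bij_imp_permutes)
  have len: "length xs = length l" using l xs by (metis distinct_card)
  have img: "list_perm l xs ` set l = set l"
    using map_list_perm[OF l len] xs by (metis set_map)
  thus "bij_betw (list_perm l xs) (set l) (set l)"
    by (simp add: bij_betw_def eq_card_imp_inj_on)
qed (rule list_perm_outside)

lemma list_perm_swap_adj:
  assumes l: "distinct l" and xs: "distinct xs" "set xs = set l" and i: "Suc i < length xs"
  shows "list_perm l (swap_adj i xs) = Transposition.transpose (xs ! i) (xs ! Suc i) \<circ> list_perm l xs"
proof (rule list_perm_eqI[OF l])
  have len: "length xs = length l" using l xs by (metis distinct_card)
  thus "length (swap_adj i xs) = length l" by simp
  show "map (Transposition.transpose (xs ! i) (xs ! Suc i) \<circ> list_perm l xs) l = swap_adj i xs"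
    using xs i len by (intro nth_equalityI)
      (auto simp: list_perm_nth[OF l len] nth_swap_adj transpose_def nth_eq_iff_index_eq)
  show "(Transposition.transpose (xs ! i) (xs ! Suc i) \<circ> list_perm l xs) y = y" if "y \<notin> set l" for y
    using that xs i nth_mem[of i xs] nth_mem[of "Suc i" xs]
    by (auto simp: list_perm_outside transpose_def)
qed

definition simplex_cochain :: "'a set \<Rightarrow> 'a list \<Rightarrow> real" where
  "simplex_cochain \<sigma> xs =
    (if distinct xs \<and> set xs = \<sigma> then of_int (sign (list_perm (list_of \<sigma>) xs)) else 0)"

lemma simplex_cochain_list_of:
  assumes "finite \<tau>"
  shows "simplex_cochain \<sigma> (list_of \<tau>) = (if \<sigma> = \<tau> then 1 else 0)"
proof -
  have l: "distinct (list_of \<tau>)" "set (list_of \<tau>) = \<tau>" using list_of[OF assms] by auto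
  have "list_perm (list_of \<tau>) (list_of \<tau>) = id" by (rule list_perm_eqI) (auto simp: l)
  thus ?thesis using l by (simp add: simplex_cochain_def)
qed

lemma alternating_simplex_cochain:
  assumes fin: "finite \<sigma>"
  shows "alternating (simplex_cochain \<sigma>)"
  unfolding alternating_def
proof (intro allI impI)
  fix xs :: "'a list" and i assume i: "Suc i < length xs"
  show "simplex_cochain \<sigma> (swap_adj i xs) = - simplex_cochain \<sigma> xs"
  proof (cases "distinct xs \<and> set xs = \<sigma>")
    case True
    define l where "l = list_of \<sigma>"
    have l: "distinct l" "set l = \<sigma>" using list_of[OF fin] by (auto simp: l_def)
    have "xs ! i \<noteq> xs ! Suc i" using True i by (auto simp: nth_eq_iff_index_eq)
    moreover have "permutation (list_perm l xs)"
      using list_perm_permutes[OF l(1)] True l by (auto intro: permutes_imp_permutation)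
    ultimately have "sign (list_perm l (swap_adj i xs)) = - sign (list_perm l xs)"
      using list_perm_swap_adj[OF l(1) _ _ i] True l
      by (simp add: sign_compose permutation_swap_id sign_swap_id)
    thus ?thesis using True i by (simp add: simplex_cochain_def set_swap_adj distinct_swap_adj l_def)
  qed (use i in \<open>auto simp: simplex_cochain_def set_swap_adj distinct_swap_adj\<close>)
qed

lemma alternating_eq_simplex_cochain:
  assumes f: "alternating f" and xs: "distinct xs"
  shows "f xs = simplex_cochain (set xs) xs * f (list_of (set xs))"
proof -
  define l where "l = list_of (set xs)"
  have l: "distinct l" "set l = set xs" using list_of[of "set xs"] by (auto simp: l_def)
  have len: "length xs = length l" using l xs by (metis distinct_card)
  have "f xs = f (map (list_perm l xs) l)" using map_list_perm[OF l(1) len] by simp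
  also have "\<dots> = of_int (sign (list_perm l xs)) * f l"
    by (rule alternating_permute[OF f l(1) list_perm_permutes[OF l(1) xs l(2)[symmetric]]])
  finally show ?thesis using xs by (simp add: simplex_cochain_def l_def)
qed

definition simplices :: "'a set \<Rightarrow> ('a \<Rightarrow> 'a \<Rightarrow> bool) \<Rightarrow> nat \<Rightarrow> 'a set set" where
  "simplices V E p = {\<sigma>. clique V E \<sigma> \<and> card \<sigma> = Suc p}"

lemma finite_clique: "finite V \<Longrightarrow> clique V E \<sigma> \<Longrightarrow> finite \<sigma>"
  unfolding clique_def by (blast intro: finite_subset)

lemma finite_cliques: "finite V \<Longrightarrow> finite {\<sigma>. clique V E \<sigma>}"
  by (rule finite_subset[of _ "Pow V"]) (auto simp: clique_def)

lemma finite_simplices: "finite V \<Longrightarrow> finite (simplices V E p)"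
  by (rule finite_subset[OF _ finite_cliques]) (auto simp: simplices_def)

lemma osimplex_iff_simplices: "osimplex V E p xs \<longleftrightarrow> distinct xs \<and> set xs \<in> simplices V E p"
  by (auto simp: osimplex_def simplices_def distinct_card)

lemma simplex_cochain_in_cochains:
  assumes V: "finite V" and \<sigma>: "\<sigma> \<in> simplices V E p"
  shows "simplex_cochain \<sigma> \<in> cochains V E p"
  unfolding cochains_iff
proof (intro conjI allI impI)
  show "alternating (simplex_cochain \<sigma>)"
    using \<sigma> finite_clique[OF V] by (intro alternating_simplex_cochain) (auto simp: simplices_def)
  fix xs assume "\<not> osimplex V E p xs"
  thus "simplex_cochain \<sigma> xs = 0"
    using \<sigma> by (auto simp: simplex_cochain_def osimplex_iff_simplices)
qed

lemma cochain_expansion: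
  assumes V: "finite V" and f: "f \<in> cochains V E p"
  shows "f = (\<Sum>\<sigma>\<in>simplices V E p. f (list_of \<sigma>) *\<^sub>R simplex_cochain \<sigma>)"
proof
  fix xs
  have f_alt: "alternating f" and f0: "\<not> osimplex V E p xs \<Longrightarrow> f xs = 0"
    using f by (auto simp: cochains_iff)
  show "f xs = (\<Sum>\<sigma>\<in>simplices V E p. f (list_of \<sigma>) *\<^sub>R simplex_cochain \<sigma>) xs"
  proof (cases "osimplex V E p xs")
    case True
    hence "(\<Sum>\<sigma>\<in>simplices V E p. f (list_of \<sigma>) *\<^sub>R simplex_cochain \<sigma>) xs
        = (\<Sum>\<sigma>\<in>simplices V E p. if \<sigma> = set xs then f (list_of \<sigma>) * simplex_cochain \<sigma> xs else 0)"
      by (auto simp: sum_fun_apply simplex_cochain_def intro: sum.cong)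
    also have "\<dots> = f xs"
      using True finite_simplices[OF V] alternating_eq_simplex_cochain[OF f_alt]
      by (simp add: osimplex_iff_simplices)
    finally show ?thesis by simp
  next
    case False
    thus ?thesis
      by (auto simp: f0 sum_fun_apply simplex_cochain_def osimplex_iff_simplices intro: sum.neutral)
  qed
qed

lemma cochain_trace:
  assumes V: "finite V" and T: "graph_endo V E T"
  shows "quot_trace (cochains V E p) {0} (pullback V E p T)
    = (\<Sum>\<sigma>\<in>simplices V E p. simplex_cochain \<sigma> (map T (list_of \<sigma>)))"
proof -
  have lst: "finite \<sigma>" "osimplex V E p (list_of \<sigma>)" if "\<sigma> \<in> simplices V E p" for \<sigma>
  proof -
    show fin: "finite \<sigma>" using that finite_clique[OF V] by (auto simp: simplices_def)
    show "osimplex V E p (list_of \<sigma>)" using that list_of[OF fin] by (simp add: osimplex_iff_simplices)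
  qed
  have "quot_trace (cochains V E p) {0} (pullback V E p T)
      = (\<Sum>\<sigma>\<in>simplices V E p. pullback V E p T (simplex_cochain \<sigma>) (list_of \<sigma>))"
  proof (rule quot_trace_point_basis)
    show "finite (simplices V E p)" by (rule finite_simplices[OF V])
    show "simplex_cochain ` simplices V E p \<subseteq> cochains V E p"
      using simplex_cochain_in_cochains[OF V] by blast
    show "\<forall>k\<in>cochains V E p. pullback V E p T k \<in> cochains V E p"
      using pullback_in_cochains by blast
    show "\<And>\<sigma> \<tau>. \<tau> \<in> simplices V E p \<Longrightarrow>
        simplex_cochain \<sigma> (list_of \<tau>) = (if \<sigma> = \<tau> then 1 else 0)"
      using lst(1) by (simp add: simplex_cochain_list_of)
  qed (use cochain_expansion[OF V] linear_pullback in auto)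
  also have "\<dots> = (\<Sum>\<sigma>\<in>simplices V E p. simplex_cochain \<sigma> (map T (list_of \<sigma>)))"
    using lst(2) by (intro sum.cong) (auto simp: pullback_def)
  finally show ?thesis .
qed

lemma simplex_cochain_map:
  assumes fin: "finite \<sigma>"
  shows "simplex_cochain \<sigma> (map T (list_of \<sigma>)) = (if T ` \<sigma> = \<sigma> then of_int (sign_on \<sigma> T) else 0)"
proof (cases "T ` \<sigma> = \<sigma>")
  case True
  define l where "l = list_of \<sigma>"
  have l: "distinct l" "set l = \<sigma>" using list_of[OF fin] by (auto simp: l_def)
  have "distinct (map T l)"
    using True l by (simp add: card_distinct distinct_card[OF l(1), symmetric])
  moreover have "list_perm l (map T l) = restrict_id T \<sigma>"
    by (rule list_perm_eqI) (auto simp: l)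
  ultimately show ?thesis using True l by (simp add: simplex_cochain_def sign_on_def l_def)
next
  case False
  thus ?thesis using list_of[OF fin] by (auto simp: simplex_cochain_def)
qed

text \<open>For an \<open>f\<close>-invariant finite set \<open>U\<close>, \<open>cycle_parity f U = (-1)^k\<close> where \<open>k\<close> is the number of
  cycles of \<open>f\<close> on \<open>U\<close>.\<close>

definition cycle_parity :: "('a \<Rightarrow> 'a) \<Rightarrow> 'a set \<Rightarrow> real" where
  "cycle_parity f U = (-1) ^ card U * of_int (sign_on U f)"

theorem lefschetz_fixed_cliques:
  assumes V: "finite V" and T: "graph_endo V E T"
  shows "lefschetz V E T = - (\<Sum>\<sigma> | clique V E \<sigma> \<and> T ` \<sigma> = \<sigma>. cycle_parity T \<sigma>)"
proof -
  define w where "w = (\<lambda>\<sigma>. (-1) ^ (card \<sigma> - 1) * simplex_cochain \<sigma> (map T (list_of \<sigma>)))"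
  have card: "card \<sigma> \<noteq> 0" "card \<sigma> \<le> card V" if "clique V E \<sigma>" for \<sigma>
    using that finite_clique[OF V that] V by (auto simp: clique_def card_mono)
  have simplices_eq: "simplices V E p = {\<sigma> \<in> {\<sigma>. clique V E \<sigma>}. card \<sigma> - 1 = p}" for p
    using card by (force simp: simplices_def)
  have "lefschetz V E T = (\<Sum>p\<le>card V. \<Sum>\<sigma>\<in>simplices V E p. w \<sigma>)"
    unfolding hopf_trace_formula[OF V T] cochain_trace[OF V T] sum_distrib_left
    by (intro sum.cong refl) (simp add: w_def simplices_def)
  also have "\<dots> = (\<Sum>\<sigma> | clique V E \<sigma>. w \<sigma>)"
    unfolding simplices_eq using card
    by (intro sum.group finite_cliques V) (auto intro: le_trans[OF diff_le_self])
  also have "\<dots> = (\<Sum>\<sigma> | clique V E \<sigma> \<and> T ` \<sigma> = \<sigma>. - cycle_parity T \<sigma>)"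
  proof -
    have "w \<sigma> = (if T ` \<sigma> = \<sigma> then - cycle_parity T \<sigma> else 0)" if "clique V E \<sigma>" for \<sigma>
      using card[OF that] finite_clique[OF V that]
      by (cases "card \<sigma>") (simp_all add: w_def simplex_cochain_map cycle_parity_def)
    hence "(\<Sum>\<sigma> | clique V E \<sigma>. w \<sigma>)
        = (\<Sum>\<sigma> | clique V E \<sigma>. if T ` \<sigma> = \<sigma> then - cycle_parity T \<sigma> else 0)"
      by (intro sum.cong) auto
    also have "\<dots> = (\<Sum>\<sigma> \<in> {\<sigma> \<in> {\<sigma>. clique V E \<sigma>}. T ` \<sigma> = \<sigma>}. - cycle_parity T \<sigma>)"
      by (rule sum.inter_filter[OF finite_cliques[OF V], symmetric])
    finally show ?thesis by simp
  qed
  finally show ?thesis by (simp add: sum_negf)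
qed

section \<open>Cycle parities of invariant subsets\<close>

definition invariant_subsets :: "('a \<Rightarrow> 'a) \<Rightarrow> 'a set \<Rightarrow> 'a set set" where
  "invariant_subsets f Y = {U. U \<subseteq> Y \<and> f ` U = U}"

lemma finite_invariant_subsets: "finite Y \<Longrightarrow> finite (invariant_subsets f Y)"
  by (rule finite_subset[of _ "Pow Y"]) (auto simp: invariant_subsets_def)

lemma invariant_subsets_of_member:
  "A' \<in> invariant_subsets f A \<Longrightarrow> invariant_subsets f A' = {A'' \<in> invariant_subsets f A. A'' \<subseteq> A'}"
  unfolding invariant_subsets_def by blast

lemma bij_betw_invariant: "finite U \<Longrightarrow> f ` U = U \<Longrightarrow> bij_betw f U U"
  unfolding bij_betw_def by (auto intro: eq_card_imp_inj_on)

lemma image_Diff_invariant: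
  "finite Y \<Longrightarrow> f ` Y = Y \<Longrightarrow> U \<subseteq> Y \<Longrightarrow> f ` U = U \<Longrightarrow> f ` (Y - U) = Y - U"
  using inj_on_image_set_diff[of f Y Y U] bij_betw_invariant[of Y f] by (auto simp: bij_betw_def)

lemma sign_cycle_of_list: "distinct cs \<Longrightarrow> sign (cycle_of_list cs) = (-1) ^ (length cs - 1)"
proof (induction cs rule: cycle_of_list.induct)
  case (1 i j cs)
  have "sign (cycle_of_list (i # j # cs))
      = sign (Transposition.transpose i j) * sign (cycle_of_list (j # cs))"
    unfolding cycle_of_list.simps(1) by (rule sign_compose[OF permutation_swap_id permutation_of_cycle])
  with 1 show ?case by (simp add: sign_swap_id del: cycle_of_list.simps)
qed simp_all

lemma sign_on_Un:
  assumes "finite U" "finite W" "U \<inter> W = {}" "f ` U = U" "f ` W = W"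
  shows "sign_on (U \<union> W) f = sign_on U f * sign_on W f"
proof -
  have "restrict_id f (U \<union> W) = restrict_id f U \<circ> restrict_id f W"
    using assms(3,5) by (auto simp: fun_eq_iff restrict_id_def)
  moreover have "permutation (restrict_id f X)" if "finite X" "f ` X = X" for X
    using permutes_imp_permutation[OF that(1) permutes_restrict_id[OF bij_betw_invariant[OF that]]] .
  ultimately show ?thesis using assms by (simp add: sign_on_def sign_compose)
qed

lemma cycle_parity_Un:
  assumes "finite U" "finite W" "U \<inter> W = {}" "f ` U = U" "f ` W = W"
  shows "cycle_parity f (U \<union> W) = cycle_parity f U * cycle_parity f W"
  using sign_on_Un[OF assms] card_Un_disjoint[OF assms(1-3)] by (simp add: cycle_parity_def power_add)

lemma cycle_parity_empty [simp]: "cycle_parity f {} = 1"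
  by (simp add: cycle_parity_def sign_on_def restrict_id_def)

lemma cycle_parity_support:
  assumes p: "permutation p"
  shows "cycle_parity p (set (support p y)) = -1"
proof -
  define cs where "cs = support p y"
  have L: "length cs > 0" using least_power_of_permutation[OF p] by (simp add: cs_def)
  have d: "distinct cs" unfolding cs_def by (rule cycle_of_permutation[OF p])
  have "restrict_id p (set cs) x = cycle_of_list cs x" for x
  proof (cases "x \<in> set cs")
    case True
    hence "p x = cycle_of_list cs x" using cycle_restrict[OF p] unfolding cs_def by blast
    thus ?thesis using True by simp
  qed (simp add: id_outside_supp)
  hence "restrict_id p (set cs) = cycle_of_list cs" ..
  hence "sign_on (set cs) p = (-1) ^ (length cs - 1)"
    by (simp add: sign_on_def sign_cycle_of_list[OF d])
  moreover have "(-1::real) ^ length cs = - ((-1) ^ (length cs - 1))"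
    using L by (cases "length cs") auto
  ultimately show ?thesis by (simp add: cycle_parity_def distinct_card[OF d] cs_def[symmetric])
qed

lemma support_subset:
  assumes p: "permutation p" and U: "\<And>x. x \<in> U \<Longrightarrow> p x \<in> U"
    and z: "z \<in> U" "z \<in> set (support p y)"
  shows "set (support p y) \<subseteq> U"
proof -
  have pow: "(p ^^ n) x \<in> U" if "x \<in> U" for x n
    using that by (induction n) (auto intro: U)
  obtain i where i: "z = (p ^^ i) y" using z(2) support_set[OF p] by auto
  define L where "L = least_power p y"
  have "i \<le> L * i" using least_power_of_permutation(2)[OF p, of y] by (simp add: L_def)
  have "(p ^^ (L * i - i)) z = (p ^^ (L * i - i + i)) y" by (simp add: i funpow_add)
  also have "L * i - i + i = L * i" using \<open>i \<le> L * i\<close> by simp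
  also have "(p ^^ (L * i)) y = y" using least_power_dvd[OF p, of y "L * i"] by (simp add: L_def)
  finally have "y \<in> U" using pow[OF z(1)] by metis
  thus ?thesis using pow support_set[OF p] by auto
qed

lemma invariant_orbit:
  assumes Y: "finite Y" "f ` Y = Y" and y: "y \<in> Y"
  obtains Ob where "Ob \<subseteq> Y" "y \<in> Ob" "f ` Ob = Ob" "cycle_parity f Ob = -1"
    "\<And>U. U \<in> invariant_subsets f Y \<Longrightarrow> U \<inter> Ob = {} \<or> Ob \<subseteq> U"
proof -
  define p where "p = restrict_id f Y"
  have pY: "p permutes Y" unfolding p_def by (rule permutes_restrict_id[OF bij_betw_invariant[OF Y]])
  have p: "permutation p" by (rule permutes_imp_permutation[OF Y(1) pY])
  define Ob where "Ob = set (support p y)"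
  have Ob: "Ob = range (\<lambda>i. (p ^^ i) y)" unfolding Ob_def by (rule support_set[OF p])
  have "(p ^^ i) y \<in> Y" for i by (induction i) (auto simp: y permutes_in_image[OF pY])
  hence OY: "Ob \<subseteq> Y" using Ob by auto
  have yO: "y \<in> Ob" using Ob by (metis funpow_0 rangeI)
  have fp: "f x = p x" if "x \<in> Y" for x using that by (simp add: p_def)
  have "p ((p ^^ i) y) \<in> range (\<lambda>i. (p ^^ i) y)" for i
    using rangeI[of "\<lambda>i. (p ^^ i) y" "Suc i"] by simp
  hence "p ` Ob \<subseteq> Ob" unfolding Ob by blast
  hence "p ` Ob = Ob"
    using OY Y(1) permutes_inj_on[OF pY]
    by (intro endo_inj_surj) (auto intro: finite_subset inj_on_subset)
  moreover have "f ` Ob = p ` Ob" using OY fp by (intro image_cong) auto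
  ultimately have iO: "f ` Ob = Ob" by simp
  have "cycle_parity f Ob = cycle_parity p Ob"
    using OY fp by (simp add: cycle_parity_def restrict_id_def sign_on_def subset_iff cong: if_cong)
  also have "\<dots> = -1" unfolding Ob_def by (rule cycle_parity_support[OF p])
  finally have eO: "cycle_parity f Ob = -1" .
  have "U \<inter> Ob = {} \<or> Ob \<subseteq> U" if U: "U \<in> invariant_subsets f Y" for U
  proof (cases "U \<inter> Ob = {}")
    case False
    then obtain z where "z \<in> U" "z \<in> Ob" by blast
    moreover have "p x \<in> U" if "x \<in> U" for x
      using U that fp by (force simp: invariant_subsets_def)
    ultimately show ?thesis using support_subset[OF p] unfolding Ob_def by blast
  qed simp
  thus ?thesis using that[OF OY yO iO eO] by blast
qed

lemma invariant_subsets_split: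
  assumes Y: "finite Y" "f ` Y = Y" and Ob: "Ob \<subseteq> Y" "f ` Ob = Ob"
    and cov: "\<And>U. U \<in> invariant_subsets f Y \<Longrightarrow> U \<inter> Ob = {} \<or> Ob \<subseteq> U"
  shows "invariant_subsets f Y
    = invariant_subsets f (Y - Ob) \<union> (\<lambda>U. U \<union> Ob) ` invariant_subsets f (Y - Ob)"
proof (intro equalityI subsetI)
  fix U assume U: "U \<in> invariant_subsets f Y"
  hence UY: "U \<subseteq> Y" "f ` U = U" by (auto simp: invariant_subsets_def)
  show "U \<in> invariant_subsets f (Y - Ob) \<union> (\<lambda>U. U \<union> Ob) ` invariant_subsets f (Y - Ob)"
  proof (cases "U \<inter> Ob = {}")
    case True
    thus ?thesis using UY by (auto simp: invariant_subsets_def)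
  next
    case False
    hence "Ob \<subseteq> U" using cov[OF U] by blast
    moreover have "f ` (U - Ob) = U - Ob"
      using UY Ob \<open>Ob \<subseteq> U\<close> finite_subset[OF UY(1) Y(1)] by (intro image_Diff_invariant) auto
    ultimately have "U - Ob \<in> invariant_subsets f (Y - Ob)" "U = (U - Ob) \<union> Ob"
      using UY by (auto simp: invariant_subsets_def)
    thus ?thesis by blast
  qed
next
  fix U assume "U \<in> invariant_subsets f (Y - Ob) \<union> (\<lambda>U. U \<union> Ob) ` invariant_subsets f (Y - Ob)"
  thus "U \<in> invariant_subsets f Y"
    using Ob by (auto simp: invariant_subsets_def image_Un)
qed

lemma sum_cycle_parity_invariant_subsets:
  assumes "finite Y" and "f ` Y = Y"
  shows "(\<Sum>U\<in>invariant_subsets f Y. cycle_parity f U) = (if Y = {} then 1 else 0)"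
  using assms
proof (induction "card Y" arbitrary: Y rule: less_induct)
  case less
  show ?case
  proof (cases "Y = {}")
    case True
    hence "invariant_subsets f Y = {{}}" by (auto simp: invariant_subsets_def)
    thus ?thesis using True by simp
  next
    case False
    then obtain y where "y \<in> Y" by blast
    then obtain Ob where Ob: "Ob \<subseteq> Y" "y \<in> Ob" "f ` Ob = Ob" "cycle_parity f Ob = -1"
      and cov: "\<And>U. U \<in> invariant_subsets f Y \<Longrightarrow> U \<inter> Ob = {} \<or> Ob \<subseteq> U"
      using invariant_orbit[OF less.prems] by blast
    define \<U> where "\<U> = invariant_subsets f (Y - Ob)"
    have fin: "finite \<U>" "finite Ob"
      using less.prems(1) Ob(1) by (auto simp: \<U>_def finite_invariant_subsets intro: finite_subset)
    have disj: "U \<inter> Ob = {}" "finite U" "f ` U = U" if "U \<in> \<U>" for U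
      using that less.prems(1) by (auto simp: \<U>_def invariant_subsets_def intro: finite_subset)
    have inj: "inj_on (\<lambda>U. U \<union> Ob) \<U>"
    proof (rule inj_onI)
      fix U1 U2 assume "U1 \<in> \<U>" "U2 \<in> \<U>" "U1 \<union> Ob = U2 \<union> Ob"
      thus "U1 = U2" using disj(1) by blast
    qed
    \<comment> \<open>removing the orbit of \<open>y\<close> flips the parity, so the two halves cancel\<close>
    have split: "invariant_subsets f Y = \<U> \<union> (\<lambda>U. U \<union> Ob) ` \<U>"
      unfolding \<U>_def by (rule invariant_subsets_split[OF less.prems Ob(1,3) cov])
    have "\<U> \<inter> (\<lambda>U. U \<union> Ob) ` \<U> = {}"
      using Ob(2) by (auto simp: \<U>_def invariant_subsets_def)
    hence "(\<Sum>U\<in>invariant_subsets f Y. cycle_parity f U)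
        = (\<Sum>U\<in>\<U>. cycle_parity f U) + (\<Sum>U\<in>\<U>. cycle_parity f (U \<union> Ob))"
      unfolding split using fin by (simp add: sum.union_disjoint sum.reindex[OF inj])
    also have "(\<Sum>U\<in>\<U>. cycle_parity f (U \<union> Ob)) = - (\<Sum>U\<in>\<U>. cycle_parity f U)"
      using disj fin(2) Ob(3,4) by (simp add: cycle_parity_Un sum_negf[symmetric])
    finally show ?thesis using False by simp
  qed
qed

lemma sum_cycle_parity_complements:
  assumes A: "finite A" "f ` A = A" and Z: "Z \<subseteq> A" "f ` Z = Z"
  shows "(\<Sum>A'\<in>{A' \<in> invariant_subsets f A. Z \<subseteq> A'}. cycle_parity f (A - A')) = (if Z = A then 1 else 0)"
proof -
  have "bij_betw (\<lambda>A'. A - A') {A' \<in> invariant_subsets f A. Z \<subseteq> A'} (invariant_subsets f (A - Z))"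
  proof (rule bij_betw_byWitness[where f' = "\<lambda>U. A - U"])
    show "(\<lambda>A'. A - A') ` {A' \<in> invariant_subsets f A. Z \<subseteq> A'} \<subseteq> invariant_subsets f (A - Z)"
    proof clarify
      fix A' assume "A' \<in> invariant_subsets f A" "Z \<subseteq> A'"
      moreover from this have "f ` (A - A') = A - A'"
        by (intro image_Diff_invariant[OF A]) (auto simp: invariant_subsets_def)
      ultimately show "A - A' \<in> invariant_subsets f (A - Z)" by (auto simp: invariant_subsets_def)
    qed
    show "(\<lambda>U. A - U) ` invariant_subsets f (A - Z) \<subseteq> {A' \<in> invariant_subsets f A. Z \<subseteq> A'}"
    proof
      fix X assume "X \<in> (\<lambda>U. A - U) ` invariant_subsets f (A - Z)"
      then obtain U where U: "U \<in> invariant_subsets f (A - Z)" "X = A - U" by blast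
      hence "U \<subseteq> A" "f ` U = U" "U \<inter> Z = {}" by (auto simp: invariant_subsets_def)
      thus "X \<in> {A' \<in> invariant_subsets f A. Z \<subseteq> A'}"
        using U(2) image_Diff_invariant[OF A] Z(1) by (auto simp: invariant_subsets_def)
    qed
  qed (auto simp: invariant_subsets_def)
  hence "(\<Sum>A'\<in>{A' \<in> invariant_subsets f A. Z \<subseteq> A'}. cycle_parity f (A - A'))
      = (\<Sum>U\<in>invariant_subsets f (A - Z). cycle_parity f U)"
    by (rule sum.reindex_bij_betw)
  also have "\<dots> = (if A - Z = {} then 1 else 0)"
    using A Z by (intro sum_cycle_parity_invariant_subsets image_Diff_invariant) auto
  finally show ?thesis using Z by auto
qed

lemma moebius_invariant_subsets:
  assumes A: "finite A" "f ` A = A"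
  shows "(\<Sum>A'\<in>invariant_subsets f A. cycle_parity f (A - A') *
      (\<Sum>A''\<in>invariant_subsets f A'. h A'')) = h A"
proof -
  have fin: "finite (invariant_subsets f A)" using A(1) by (rule finite_invariant_subsets)
  have "(\<Sum>A'\<in>invariant_subsets f A. cycle_parity f (A - A') * (\<Sum>A''\<in>invariant_subsets f A'. h A''))
      = (\<Sum>A'\<in>invariant_subsets f A. \<Sum>A''\<in>{A'' \<in> invariant_subsets f A. A'' \<subseteq> A'}.
          cycle_parity f (A - A') * h A'')"
    by (intro sum.cong refl) (simp add: invariant_subsets_of_member sum_distrib_left)
  also have "\<dots> = (\<Sum>A''\<in>invariant_subsets f A. \<Sum>A'\<in>{A' \<in> invariant_subsets f A. A'' \<subseteq> A'}.
          cycle_parity f (A - A') * h A'')"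
    by (rule sum.swap_restrict[OF fin fin])
  also have "\<dots> = (\<Sum>A''\<in>invariant_subsets f A. if A'' = A then h A'' else 0)"
  proof (intro sum.cong refl)
    fix A'' assume "A'' \<in> invariant_subsets f A"
    hence "(\<Sum>A'\<in>{A' \<in> invariant_subsets f A. A'' \<subseteq> A'}. cycle_parity f (A - A'))
        = (if A'' = A then 1 else 0)"
      using A by (intro sum_cycle_parity_complements) (auto simp: invariant_subsets_def)
    thus "(\<Sum>A'\<in>{A' \<in> invariant_subsets f A. A'' \<subseteq> A'}. cycle_parity f (A - A') * h A'')
        = (if A'' = A then h A'' else 0)"
      by (simp add: sum_distrib_right[symmetric])
  qed
  also have "\<dots> = h A" using fin A(2) by (simp add: invariant_subsets_def)
  finally show ?thesis .
qed

section \<open>Invariant subsets of a product\<close>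

definition subdirect_sets :: "('a \<Rightarrow> 'a) \<Rightarrow> ('b \<Rightarrow> 'b) \<Rightarrow> 'a set \<Rightarrow> 'b set \<Rightarrow> ('a \<times> 'b) set set" where
  "subdirect_sets T S A B = {X. map_prod T S ` X = X \<and> fst ` X = A \<and> snd ` X = B}"

lemma subset_times_projections: "X \<subseteq> fst ` X \<times> snd ` X"
  by force

lemma invariant_projections:
  assumes "map_prod T S ` X = X"
  shows "T ` fst ` X = fst ` X" "S ` snd ` X = snd ` X"
  using arg_cong[OF assms, of "image fst"] arg_cong[OF assms, of "image snd"]
  by (simp_all add: image_image)

lemma sum_group_projections:
  assumes "finite \<X>" "finite \<A>" "finite \<B>" "\<And>X. X \<in> \<X> \<Longrightarrow> fst ` X \<in> \<A> \<and> snd ` X \<in> \<B>"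
  shows "(\<Sum>X\<in>\<X>. h X) = (\<Sum>A\<in>\<A>. \<Sum>B\<in>\<B>. \<Sum>X\<in>{X \<in> \<X>. fst ` X = A \<and> snd ` X = B}. h X)"
proof -
  have "(\<Sum>X\<in>\<X>. h X) = (\<Sum>AB\<in>\<A> \<times> \<B>. \<Sum>X\<in>{X \<in> \<X>. (fst ` X, snd ` X) = AB}. h X)"
    using assms by (intro sum.group[symmetric]) auto
  thus ?thesis by (simp add: sum.cartesian_product')
qed

lemma invariant_subsets_times_eq_subdirect_sets:
  assumes "A \<subseteq> A'" "B \<subseteq> B'"
  shows "{X \<in> invariant_subsets (map_prod T S) (A' \<times> B'). fst ` X = A \<and> snd ` X = B}
    = subdirect_sets T S A B"
  using assms subset_times_projections
  by (auto simp: invariant_subsets_def subdirect_sets_def)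

lemma sum_cycle_parity_times:
  assumes "finite A" "finite B" "T ` A = A" "S ` B = B"
  shows "(\<Sum>X\<in>invariant_subsets (map_prod T S) (A \<times> B). cycle_parity (map_prod T S) X)
    = (if A = {} \<or> B = {} then 1 else 0)"
  using assms by (subst sum_cycle_parity_invariant_subsets) (auto simp: map_prod_surj_on)

lemma sum_cycle_parity_times_subdirect:
  assumes "finite A" "finite B"
  shows "(\<Sum>X\<in>invariant_subsets (map_prod T S) (A \<times> B). cycle_parity (map_prod T S) X)
    = (\<Sum>A'\<in>invariant_subsets T A. \<Sum>B'\<in>invariant_subsets S B.
        \<Sum>X\<in>subdirect_sets T S A' B'. cycle_parity (map_prod T S) X)"
proof -
  have "fst ` X \<in> invariant_subsets T A \<and> snd ` X \<in> invariant_subsets S B"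
    if "X \<in> invariant_subsets (map_prod T S) (A \<times> B)" for X
    using that invariant_projections[of T S X] by (force simp: invariant_subsets_def)
  hence "(\<Sum>X\<in>invariant_subsets (map_prod T S) (A \<times> B). cycle_parity (map_prod T S) X)
      = (\<Sum>A'\<in>invariant_subsets T A. \<Sum>B'\<in>invariant_subsets S B.
          \<Sum>X\<in>{X \<in> invariant_subsets (map_prod T S) (A \<times> B). fst ` X = A' \<and> snd ` X = B'}.
            cycle_parity (map_prod T S) X)"
    using assms by (intro sum_group_projections) (auto simp: finite_invariant_subsets)
  also have "\<dots> = (\<Sum>A'\<in>invariant_subsets T A. \<Sum>B'\<in>invariant_subsets S B.
        \<Sum>X\<in>subdirect_sets T S A' B'. cycle_parity (map_prod T S) X)"
    by (intro sum.cong refl invariant_subsets_times_eq_subdirect_sets) (auto simp: invariant_subsets_def)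
  finally show ?thesis .
qed

lemma moebius_invariant_subsets2:
  assumes A: "finite A" "T ` A = A" and B: "finite B" "S ` B = B"
    and g: "\<And>A' B'. A' \<in> invariant_subsets T A \<Longrightarrow> B' \<in> invariant_subsets S B \<Longrightarrow>
      g A' B' = (\<Sum>A''\<in>invariant_subsets T A'. \<Sum>B''\<in>invariant_subsets S B'. h A'' B'')"
  shows "(\<Sum>A'\<in>invariant_subsets T A. \<Sum>B'\<in>invariant_subsets S B.
      cycle_parity T (A - A') * cycle_parity S (B - B') * g A' B') = h A B"
proof -
  have "(\<Sum>A'\<in>invariant_subsets T A. \<Sum>B'\<in>invariant_subsets S B.
      cycle_parity T (A - A') * cycle_parity S (B - B') * g A' B')
    = (\<Sum>A'\<in>invariant_subsets T A. cycle_parity T (A - A') * (\<Sum>A''\<in>invariant_subsets T A'.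
        \<Sum>B'\<in>invariant_subsets S B. cycle_parity S (B - B') *
          (\<Sum>B''\<in>invariant_subsets S B'. h A'' B'')))"
    by (intro sum.cong refl)
      (simp add: g sum_distrib_left mult.assoc sum.swap[of _ "invariant_subsets S B"])
  also have "\<dots> = (\<Sum>A'\<in>invariant_subsets T A. cycle_parity T (A - A') *
      (\<Sum>A''\<in>invariant_subsets T A'. h A'' B))"
    by (simp add: moebius_invariant_subsets[OF B])
  also have "\<dots> = h A B"
    by (rule moebius_invariant_subsets[OF A])
  finally show ?thesis .
qed

lemma sum_cycle_parity_subdirect_sets:
  assumes A: "finite A" "T ` A = A" "A \<noteq> {}" and B: "finite B" "S ` B = B" "B \<noteq> {}"
  shows "(\<Sum>X\<in>subdirect_sets T S A B. cycle_parity (map_prod T S) X)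
    = - cycle_parity T A * cycle_parity S B"
proof -
  let ?IA = "invariant_subsets T A" and ?IB = "invariant_subsets S B"
  have finI: "finite ?IA" "finite ?IB" using A B by (simp_all add: finite_invariant_subsets)
  have empty: "{} \<in> ?IA" "{} \<in> ?IB" by (simp_all add: invariant_subsets_def)
  have zero: "(\<Sum>A'\<in>?IA. cycle_parity T (A - A')) = 0" "(\<Sum>B'\<in>?IB. cycle_parity S (B - B')) = 0"
    using sum_cycle_parity_complements[OF A(1,2), of "{}"]
      sum_cycle_parity_complements[OF B(1,2), of "{}"] A B
    by simp_all
  \<comment> \<open>\<open>1 - [A' \<noteq> {}] [B' \<noteq> {}]\<close> is the parity sum over the invariant subsets of \<open>A' \<times> B'\<close>\<close>
  have "(\<Sum>X\<in>subdirect_sets T S A B. cycle_parity (map_prod T S) X)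
      = (\<Sum>A'\<in>?IA. \<Sum>B'\<in>?IB. cycle_parity T (A - A') * cycle_parity S (B - B') *
          (1 - (if A' = {} then 0 else 1) * (if B' = {} then 0 else 1)))"
  proof (rule moebius_invariant_subsets2[OF A(1,2) B(1,2), symmetric])
    fix A' B' assume "A' \<in> ?IA" "B' \<in> ?IB"
    hence "finite A'" "finite B'" "T ` A' = A'" "S ` B' = B'"
      using A B by (auto simp: invariant_subsets_def intro: finite_subset)
    thus "1 - (if A' = {} then 0 else 1) * (if B' = {} then 0 else 1)
      = (\<Sum>A''\<in>invariant_subsets T A'. \<Sum>B''\<in>invariant_subsets S B'.
          \<Sum>X\<in>subdirect_sets T S A'' B''. cycle_parity (map_prod T S) X)"
      by (simp add: sum_cycle_parity_times_subdirect[symmetric] sum_cycle_parity_times)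
  qed
  also have "\<dots> = (\<Sum>A'\<in>?IA. cycle_parity T (A - A')) * (\<Sum>B'\<in>?IB. cycle_parity S (B - B'))
      - (\<Sum>A'\<in>?IA. if A' = {} then 0 else cycle_parity T (A - A'))
        * (\<Sum>B'\<in>?IB. if B' = {} then 0 else cycle_parity S (B - B'))"
  proof -
    have "cycle_parity T (A - A') * cycle_parity S (B - B') *
        (1 - (if A' = {} then 0 else 1) * (if B' = {} then 0 else 1))
      = cycle_parity T (A - A') * cycle_parity S (B - B')
        - (if A' = {} then 0 else cycle_parity T (A - A'))
          * (if B' = {} then 0 else cycle_parity S (B - B'))"
      for A' B' by (simp add: algebra_simps)
    thus ?thesis by (simp add: sum_subtractf sum_product)
  qed
  also have "(\<Sum>A'\<in>?IA. if A' = {} then 0 else cycle_parity T (A - A')) = - cycle_parity T A"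
    using sum.remove[OF finI(1) empty(1), of "\<lambda>A'. cycle_parity T (A - A')"] zero(1)
    by (simp add: sum.If_cases[OF finI(1)] Diff_eq Int_commute)
  also have "(\<Sum>B'\<in>?IB. if B' = {} then 0 else cycle_parity S (B - B')) = - cycle_parity S B"
    using sum.remove[OF finI(2) empty(2), of "\<lambda>B'. cycle_parity S (B - B')"] zero(2)
    by (simp add: sum.If_cases[OF finI(2)] Diff_eq Int_commute)
  finally show ?thesis using zero by simp
qed

section \<open>The strong product of graphs\<close>

lemma clique_strong_prod_iff:
  "clique (V \<times> W) (strong_prod E F) X \<longleftrightarrow> clique V E (fst ` X) \<and> clique W F (snd ` X)"
proof
  assume X: "clique (V \<times> W) (strong_prod E F) X"
  have "E a c" if "(a, b) \<in> X" "(c, d) \<in> X" "a \<noteq> c" for a b c d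
    using X that by (auto simp: clique_def strong_prod_def)
  moreover have "F b d" if "(a, b) \<in> X" "(c, d) \<in> X" "b \<noteq> d" for a b c d
    using X that by (auto simp: clique_def strong_prod_def)
  ultimately show "clique V E (fst ` X) \<and> clique W F (snd ` X)"
    using X unfolding clique_def by (auto simp: image_iff)
next
  assume "clique V E (fst ` X) \<and> clique W F (snd ` X)"
  hence "fst ` X \<noteq> {}" "fst ` X \<subseteq> V" "snd ` X \<subseteq> W"
    and adjE: "\<And>a c. a \<in> fst ` X \<Longrightarrow> c \<in> fst ` X \<Longrightarrow> a \<noteq> c \<Longrightarrow> E a c"
    and adjF: "\<And>b d. b \<in> snd ` X \<Longrightarrow> d \<in> snd ` X \<Longrightarrow> b \<noteq> d \<Longrightarrow> F b d"
    unfolding clique_def by blast+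
  hence X: "X \<noteq> {}" "X \<subseteq> V \<times> W"
    using subset_times_projections[of X] by auto
  have "strong_prod E F x y" if "x \<in> X" "y \<in> X" "x \<noteq> y" for x y
  proof -
    obtain a b c d where "x = (a, b)" "y = (c, d)" by fastforce
    thus ?thesis using that adjE[of a c] adjF[of b d] by (force simp: strong_prod_def)
  qed
  thus "clique (V \<times> W) (strong_prod E F) X" using X by (simp add: clique_def)
qed

lemma graph_endo_strong_prod:
  assumes T: "graph_endo V E T" and S: "graph_endo W F S"
  shows "graph_endo (V \<times> W) (strong_prod E F) (map_prod T S)"
  using assms unfolding graph_endo_def strong_prod_def by (auto 4 4)

theorem lefschetz_strong_prod:
  assumes V: "finite V" and W: "finite W" and T: "graph_endo V E T" and S: "graph_endo W F S"
  shows "lefschetz (V \<times> W) (strong_prod E F) (map_prod T S) = lefschetz V E T * lefschetz W F S"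
proof -
  let ?P = "map_prod T S"
  define FT where "FT = {A. clique V E A \<and> T ` A = A}"
  define FS where "FS = {B. clique W F B \<and> S ` B = B}"
  define FP where "FP = {X. clique (V \<times> W) (strong_prod E F) X \<and> ?P ` X = X}"
  have fin: "finite FT" "finite FS" "finite FP"
    using finite_cliques[OF V] finite_cliques[OF W] finite_cliques[of "V \<times> W"] V W
    by (auto simp: FT_def FS_def FP_def intro: finite_subset)
  have proj: "fst ` X \<in> FT \<and> snd ` X \<in> FS" if "X \<in> FP" for X
    using that invariant_projections[of T S X]
    by (auto simp: FP_def FT_def FS_def clique_strong_prod_iff)
  have fibre: "{X \<in> FP. fst ` X = A \<and> snd ` X = B} = subdirect_sets T S A B" if "A \<in> FT" "B \<in> FS" for A B
    using that by (auto simp: FP_def FT_def FS_def subdirect_sets_def clique_strong_prod_iff)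
  have "(\<Sum>X\<in>FP. cycle_parity ?P X)
      = (\<Sum>A\<in>FT. \<Sum>B\<in>FS. \<Sum>X\<in>subdirect_sets T S A B. cycle_parity ?P X)"
    using fin proj fibre by (simp add: sum_group_projections[of FP FT FS] cong: sum.cong)
  also have "\<dots> = (\<Sum>A\<in>FT. \<Sum>B\<in>FS. - cycle_parity T A * cycle_parity S B)"
  proof (intro sum.cong refl sum_cycle_parity_subdirect_sets)
    fix A B assume "A \<in> FT" "B \<in> FS"
    hence cl: "clique V E A" "T ` A = A" "clique W F B" "S ` B = B" by (auto simp: FT_def FS_def)
    thus "finite A" "T ` A = A" "A \<noteq> {}" "finite B" "S ` B = B" "B \<noteq> {}"
      using finite_clique[OF V cl(1)] finite_clique[OF W cl(3)] by (auto simp: clique_def)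
  qed
  also have "\<dots> = - ((\<Sum>A\<in>FT. cycle_parity T A) * (\<Sum>B\<in>FS. cycle_parity S B))"
    by (simp add: sum_product sum_negf[symmetric])
  finally show ?thesis
    using lefschetz_fixed_cliques[OF V T] lefschetz_fixed_cliques[OF W S]
      lefschetz_fixed_cliques[OF _ graph_endo_strong_prod[OF T S]] V W
    by (simp add: FP_def FT_def FS_def)
qed

theorem mainTheorem6:
  fixes V :: "'a set" and E :: "'a \<Rightarrow> 'a \<Rightarrow> bool" and T :: "'a \<Rightarrow> 'a"
    and W :: "'b set" and F :: "'b \<Rightarrow> 'b \<Rightarrow> bool" and S :: "'b \<Rightarrow> 'b"
  assumes "simple_graph V E" and "simple_graph W F"
    and "graph_endo V E T" and "graph_endo W F S"
  shows "graph_endo (V \<times> W) (strong_prod E F) (\<lambda>(v, w). (T v, S w))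
    \<and> lefschetz (V \<times> W) (strong_prod E F) (\<lambda>(v, w). (T v, S w))
        = lefschetz V E T * lefschetz W F S"
proof -
  have "(\<lambda>(v, w). (T v, S w)) = map_prod T S" by (auto simp: fun_eq_iff)
  moreover have "finite V" "finite W" using assms(1,2) by (simp_all add: simple_graph_def)
  ultimately show ?thesis
    using graph_endo_strong_prod[OF assms(3,4)] lefschetz_strong_prod[OF _ _ assms(3,4)] by simp
qed

end
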